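(* Let $x_0\in\mathbb{R}\cup\{+\infty\}$, $T<x_0$, $I=[T,x_0)$, and let $\phi_1,\phi_2\in C^1(I)$ satisfy $\phi_2(x)=o(\phi_1(x))$ as $x\to x_0$, $\phi_1(x)>0$ and $\phi_2(x)\neq0$ for all $x\in I$, and $W(x):=W(\phi_1,\phi_2;x)>0$ for all $x\in I$. Let $f\in\mathcal{C}(\phi_1,\phi_2;(T,x_0))$. Then: (i) $f$ is absolutely continuous on every compact subinterval of $(T,x_0)$; (ii) the functions $f_1^*,f_2^*,F^*$ are defined a.e. on $(T,x_0)$ and, for some Lebesgue null set $N$, are monotonic on $(T,x_0)\setminus N$: $f_2^*$ is increasing; $f_1^*$ and $F^*$ have opposite types of monotonicity; and $(\operatorname{sign}\phi_2)\cdot F^*$ is increasing; (iii) for any real constants $a_1,a_2$ and any nontrivial linear combination $\tilde\phi$ of $\phi_1,\phi_2$, the function $[f(x)+a_1\phi_1(x)+a_2\phi_2(x)]/\tilde\phi(x)$ is either constant or strictly monotonic on a suitable deleted one-sided neighborhood (within $(T,x_0)$) of each of the endpoints $T$ and $x_0$; (iv) the two limits $$\lim_{x\to x_0}\frac{f(x)}{\phi_1(x)},\qquad \lim_{x\to x_0}\frac{(f(x)/\phi_2(x))'}{(\phi_1(x)/\phi_2(x))'}$$ exist in $\overline{\mathbb{R}}=\mathbb{R}\cup\{\pm\infty\}$ and are equal.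
   Context: Limits as $x\to x_0$ are taken for $x<x_0$, over points where the functions are defined. For differentiable $g,h$, $W(g,h;x):=g(x)h'(x)-g'(x)h(x)$. Generalized convexity: for a pair $(\psi_1,\psi_2)$ of continuous functions on an interval $J$, a function $f:J\to\mathbb{R}$ belongs to $\mathcal{C}(\psi_1,\psi_2;J)$ iff for all $t_1<t_2<t_3$ in $J$ $$\det\begin{pmatrix}\psi_1(t_1)&\psi_1(t_2)&\psi_1(t_3)\\ \psi_2(t_1)&\psi_2(t_2)&\psi_2(t_3)\\ f(t_1)&f(t_2)&f(t_3)\end{pmatrix}\ge0.$$ Definitions: at points $t$ where $f$ is differentiable, $f_1^*(t):=W(f,\phi_2;t)/W(t)$, $f_2^*(t):=-W(f,\phi_1;t)/W(t)$; $\Phi(x):=\phi_2(T)\phi_1(x)-\phi_1(T)\phi_2(x)$; $F^*(t):=\phi_1(T)f_1^*(t)+\phi_2(T)f_2^*(t)=W(\Phi,f;t)/W(t)$. "Increasing" means nondecreasing. *)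

theory Defs
  imports "HOL-Analysis.Analysis" "HOL-Library.Landau_Symbols"
begin

text \<open>Left-sided limit filter at x0 (x0 real or +infinity), restricted to a set D
  of points where the function under consideration is defined.\<close>
definition left_filter :: "ereal \<Rightarrow> real set \<Rightarrow> real filter" where
  "left_filter x0 D =
     inf (if x0 = \<infinity> then at_top else at_left (real_of_ereal x0)) (principal D)"

text \<open>Generalized convexity class C(psi1,psi2;J): the 3x3 determinant (expanded
  along the first row) is nonnegative for all t1 < t2 < t3 in J.\<close>
definition gen_convex ::
  "(real \<Rightarrow> real) \<Rightarrow> (real \<Rightarrow> real) \<Rightarrow> real set \<Rightarrow> (real \<Rightarrow> real) \<Rightarrow> bool" where
  "gen_convex p1 p2 J f \<longleftrightarrow>
     (\<forall>t1\<in>J. \<forall>t2\<in>J. \<forall>t3\<in>J. t1 < t2 \<and> t2 < t3 \<longrightarrow>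
        0 \<le> p1 t1 * (p2 t2 * f t3 - p2 t3 * f t2)
           - p1 t2 * (p2 t1 * f t3 - p2 t3 * f t1)
           + p1 t3 * (p2 t1 * f t2 - p2 t2 * f t1))"

definition abs_continuous_on :: "real \<Rightarrow> real \<Rightarrow> (real \<Rightarrow> real) \<Rightarrow> bool" where
  "abs_continuous_on a b f \<longleftrightarrow>
     (\<forall>\<epsilon>>0. \<exists>\<delta>>0. \<forall>(n::nat) (u::nat \<Rightarrow> real) (v::nat \<Rightarrow> real).
        (\<forall>i<n. a \<le> u i \<and> u i \<le> v i \<and> v i \<le> b) \<and>
        (\<forall>i<n. \<forall>j<n. i \<noteq> j \<longrightarrow> v i \<le> u j \<or> v j \<le> u i) \<and>
        (\<Sum>i<n. v i - u i) < \<delta>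
        \<longrightarrow> (\<Sum>i<n. \<bar>f (v i) - f (u i)\<bar>) < \<epsilon>)"

end

theory Submission
  imports Defs
begin

text \<open>Put \<open>Y = \<phi>2 / \<phi>1\<close> and \<open>H = f / \<phi>1\<close>. Positivity of the Wronskian makes \<open>Y\<close> strictly
  increasing, and \<open>\<phi>2 = o(\<phi>1)\<close> makes it increase to \<open>0\<close>, so \<open>\<phi>2 < 0\<close>. Dividing the columns
  of the defining determinant by \<open>\<phi>1\<close> shows that \<open>f \<in> C(\<phi>1, \<phi>2)\<close> means exactly that \<open>H\<close> is
  a convex function of \<open>Y\<close>, and everything follows from the monotonicity of chord slopes of
  convex functions. It makes \<open>H\<close> Lipschitz in \<open>Y\<close> on compact subintervals, hence \<open>f\<close>
  absolutely continuous; \<open>H\<close> is differentiable off the countable set where the one-sided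
  slopes differ, and there \<open>f2* = dH/dY\<close> increases while \<open>f1*\<close> and \<open>F*/\<phi>1(T)\<close> are the
  values of the tangent line at \<open>Y = 0\<close> and \<open>Y = Y(T)\<close>. A Moebius change of the variable \<open>Y\<close>
  turns \<open>(f + a1 \<phi>1 + a2 \<phi>2) / (c1 \<phi>1 + c2 \<phi>2)\<close> into a convex function again, and a convex
  function is constant or strictly monotone near each end of its interval. In particular
  \<open>H\<close> has a limit \<open>L\<close> at \<open>x0\<close>, and the tangent intercepts \<open>f1*\<close>, which equal the quotient
  of derivatives in (iv), are squeezed between \<open>L\<close> and chord intercepts tending to \<open>L\<close>.\<close>

section \<open>Left-sided limits at \<open>x0\<close>\<close>

lemma eventually_left_filter:
  assumes "x0 \<noteq> -\<infinity>"
  shows "eventually P (left_filter x0 D) \<longleftrightarrow>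
         (\<exists>a. ereal a < x0 \<and> (\<forall>x\<in>D. a < x \<and> ereal x < x0 \<longrightarrow> P x))"
proof (cases x0)
  case (real r)
  then show ?thesis
    by (auto simp: left_filter_def eventually_inf_principal eventually_at_left_field)
next
  case PInf
  have "eventually P (left_filter x0 D) \<longleftrightarrow> (\<exists>N. \<forall>x\<ge>N. x \<in> D \<longrightarrow> P x)"
    unfolding left_filter_def PInf by (simp add: eventually_inf_principal eventually_at_top_linorder)
  also have "\<dots> \<longleftrightarrow> (\<exists>a. ereal a < x0 \<and> (\<forall>x\<in>D. a < x \<and> ereal x < x0 \<longrightarrow> P x))"
  proof
    assume "\<exists>N. \<forall>x\<ge>N. x \<in> D \<longrightarrow> P x"
    then obtain N where "\<forall>x\<ge>N. x \<in> D \<longrightarrow> P x" by blast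
    then show "\<exists>a. ereal a < x0 \<and> (\<forall>x\<in>D. a < x \<and> ereal x < x0 \<longrightarrow> P x)"
      unfolding PInf by (intro exI[of _ N]) auto
  next
    assume "\<exists>a. ereal a < x0 \<and> (\<forall>x\<in>D. a < x \<and> ereal x < x0 \<longrightarrow> P x)"
    then obtain a where "\<forall>x\<in>D. a < x \<and> ereal x < x0 \<longrightarrow> P x" by blast
    then show "\<exists>N. \<forall>x\<ge>N. x \<in> D \<longrightarrow> P x"
      unfolding PInf by (intro exI[of _ "a + 1"]) auto
  qed
  finally show ?thesis .
qed (use assms in auto)

lemma left_filter_mono: "D \<subseteq> E \<Longrightarrow> left_filter x0 D \<le> left_filter x0 E"
  unfolding left_filter_def by (intro inf_mono) auto

lemma ereal_le_less_trans: "a \<le> b \<Longrightarrow> ereal b < x0 \<Longrightarrow> ereal a < x0"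
  using le_less_trans[of "ereal a" "ereal b" x0] by simp

lemma real_between_ereal: "ereal c < x0 \<Longrightarrow> \<exists>z. c < z \<and> ereal z < x0"
  by (metis ereal_dense2 ereal_less_eq(3) less_ereal.simps(1))

lemma left_filter_neq_bot:
  assumes "x0 \<noteq> -\<infinity>" "ereal T < x0" "{x. T < x \<and> ereal x < x0} \<subseteq> D"
  shows "left_filter x0 D \<noteq> bot"
proof
  assume "left_filter x0 D = bot"
  then obtain a where a: "ereal a < x0" "\<forall>x\<in>D. a < x \<and> ereal x < x0 \<longrightarrow> False"
    using eventually_left_filter[OF assms(1), of "\<lambda>x. False" D] by auto
  have "ereal (max a T) < x0" using a assms by (simp add: max_def)
  then obtain z where "max a T < z" "ereal z < x0" using real_between_ereal by blast
  then show False using a assms(3) by auto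
qed

lemma mono_on_tendsto_left_filter:
  assumes x0: "x0 \<noteq> -\<infinity>" and a: "ereal a < x0" and mono: "mono_on {x. a < x \<and> ereal x < x0} g"
  shows "((\<lambda>x. ereal (g x)) \<longlongrightarrow> (SUP x\<in>{x. a < x \<and> ereal x < x0}. ereal (g x))) (left_filter x0 D)"
    (is "(_ \<longlongrightarrow> ?L) _")
proof (rule order_tendstoI)
  fix y assume "y < ?L"
  then obtain x where x: "a < x" "ereal x < x0" "y < ereal (g x)" by (auto simp: less_SUP_iff)
  have "y < ereal (g z)" if "x < z" "ereal z < x0" for z
  proof -
    have "g x \<le> g z" using mono x that unfolding mono_on_def by auto
    then show ?thesis using x(3) by (simp add: order_less_le_trans)
  qed
  then show "eventually (\<lambda>z. y < ereal (g z)) (left_filter x0 D)"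
    unfolding eventually_left_filter[OF x0] using x by blast
next
  fix y assume "?L < y"
  moreover have "ereal (g z) \<le> ?L" if "a < z" "ereal z < x0" for z
    using that by (intro SUP_upper) auto
  ultimately show "eventually (\<lambda>z. ereal (g z) < y) (left_filter x0 D)"
    unfolding eventually_left_filter[OF x0] using a order.strict_trans1 by blast
qed

section \<open>Lipschitz functions and monotonicity\<close>

lemma mono_onI_less:
  fixes g :: "'a::order \<Rightarrow> 'b::order"
  assumes "\<And>r s. r \<in> A \<Longrightarrow> s \<in> A \<Longrightarrow> r < s \<Longrightarrow> g r \<le> g s"
  shows "mono_on A g"
  using assms by (intro mono_onI) (metis order_le_less order_refl)

lemma antimono_onI_less:
  fixes g :: "'a::order \<Rightarrow> 'b::order"
  assumes "\<And>r s. r \<in> A \<Longrightarrow> s \<in> A \<Longrightarrow> r < s \<Longrightarrow> g s \<le> g r"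
  shows "antimono_on A g"
  using assms by (intro monotone_onI) (metis order_le_less order_refl)

lemma sign_cases_if_pos_mult:
  fixes s :: real
  assumes "\<forall>x\<in>S. 0 < s * h x"
  shows "(\<forall>x\<in>S. 0 < h x) \<or> (\<forall>x\<in>S. h x < 0)"
  using assms by (cases "0 < s") (auto simp: zero_less_mult_iff)

lemma lipschitz_on_imp_abs_continuous_on:
  assumes "L-lipschitz_on {a..b} f"
  shows "abs_continuous_on a b f"
  unfolding abs_continuous_on_def
proof (intro allI impI)
  fix e :: real assume e: "e > 0"
  have L: "L \<ge> 0" "\<And>u v. u \<in> {a..b} \<Longrightarrow> v \<in> {a..b} \<Longrightarrow> \<bar>f v - f u\<bar> \<le> L * \<bar>v - u\<bar>"
    using assms by (auto simp: lipschitz_on_def dist_real_def)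
  show "\<exists>\<delta>>0. \<forall>(n::nat) (u::nat \<Rightarrow> real) v. (\<forall>i<n. a \<le> u i \<and> u i \<le> v i \<and> v i \<le> b) \<and>
        (\<forall>i<n. \<forall>j<n. i \<noteq> j \<longrightarrow> v i \<le> u j \<or> v j \<le> u i) \<and> (\<Sum>i<n. v i - u i) < \<delta>
        \<longrightarrow> (\<Sum>i<n. \<bar>f (v i) - f (u i)\<bar>) < e"
  proof (rule exI[of _ "e / (L + 1)"], intro conjI allI impI)
    show "e / (L + 1) > 0" using e L by auto
    fix n :: nat and u v :: "nat \<Rightarrow> real" assume H: "(\<forall>i<n. a \<le> u i \<and> u i \<le> v i \<and> v i \<le> b) \<and>
        (\<forall>i<n. \<forall>j<n. i \<noteq> j \<longrightarrow> v i \<le> u j \<or> v j \<le> u i) \<and> (\<Sum>i<n. v i - u i) < e / (L + 1)"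
    have "(\<Sum>i<n. \<bar>f (v i) - f (u i)\<bar>) \<le> (\<Sum>i<n. L * (v i - u i))"
    proof (rule sum_mono)
      fix i assume "i \<in> {..<n}"
      then have "a \<le> u i" "u i \<le> v i" "v i \<le> b" using H by auto
      then show "\<bar>f (v i) - f (u i)\<bar> \<le> L * (v i - u i)" using L(2)[of "u i" "v i"] by auto
    qed
    also have "\<dots> = L * (\<Sum>i<n. v i - u i)" by (simp add: sum_distrib_left)
    also have "\<dots> \<le> L * (e / (L + 1))" using H L(1) by (intro mult_left_mono) simp_all
    also have "\<dots> < e" using e L by (simp add: field_simps)
    finally show "(\<Sum>i<n. \<bar>f (v i) - f (u i)\<bar>) < e" .
  qed
qed

lemma lipschitz_on_real_mult:
  fixes f g :: "real \<Rightarrow> real"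
  assumes f: "L-lipschitz_on U f" and g: "M-lipschitz_on U g" and "compact U"
  obtains K where "K-lipschitz_on U (\<lambda>x. f x * g x)"
proof -
  obtain B where B: "B \<ge> 0" "\<And>x. x \<in> U \<Longrightarrow> \<bar>f x\<bar> \<le> B"
    using continuous_on_compact_bound[OF \<open>compact U\<close> lipschitz_on_continuous_on[OF f]] by auto
  obtain C where C: "C \<ge> 0" "\<And>x. x \<in> U \<Longrightarrow> \<bar>g x\<bar> \<le> C"
    using continuous_on_compact_bound[OF \<open>compact U\<close> lipschitz_on_continuous_on[OF g]] by auto
  have "(B * M + C * L)-lipschitz_on U (\<lambda>x. f x * g x)"
  proof (rule lipschitz_onI)
    fix x y assume xy: "x \<in> U" "y \<in> U"
    have "f x * g x - f y * g y = f x * (g x - g y) + g y * (f x - f y)" by algebra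
    then have "dist (f x * g x) (f y * g y) \<le> \<bar>f x\<bar> * dist (g x) (g y) + \<bar>g y\<bar> * dist (f x) (f y)"
      by (simp add: dist_real_def abs_mult[symmetric])
    also have "\<dots> \<le> B * (M * dist x y) + C * (L * dist x y)"
      using B C xy lipschitz_onD[OF f xy] lipschitz_onD[OF g xy]
      by (intro add_mono mult_mono) auto
    finally show "dist (f x * g x) (f y * g y) \<le> (B * M + C * L) * dist x y"
      by (simp add: algebra_simps)
  qed (use B C lipschitz_on_nonneg[OF f] lipschitz_on_nonneg[OF g] in auto)
  then show thesis by (rule that)
qed

lemma C1_imp_lipschitz_on_Icc:
  fixes F F' :: "real \<Rightarrow> real"
  assumes "\<And>x. x \<in> {a..b} \<Longrightarrow> (F has_real_derivative F' x) (at x within {a..b})"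
    and "continuous_on {a..b} F'"
  obtains L where "L-lipschitz_on {a..b} F"
proof -
  obtain B where B: "B \<ge> 0" "\<And>x. x \<in> {a..b} \<Longrightarrow> norm (F' x) \<le> B"
    using continuous_on_compact_bound[OF compact_Icc assms(2)] by auto
  have "B-lipschitz_on {a..b} F"
  proof (rule bounded_derivative_imp_lipschitz)
    show "(F has_derivative (*) (F' x)) (at x within {a..b})" if "x \<in> {a..b}" for x
      using assms(1)[OF that] by (simp add: has_field_derivative_def)
    show "onorm ((*) (F' x)) \<le> B" if "x \<in> {a..b}" for x
      using B(2)[OF that] by (intro onorm_le) (simp add: abs_mult mult_right_mono)
  qed (use B in auto)
  then show thesis by (rule that)
qed

section \<open>Convexity relative to a strictly increasing function\<close>

text \<open>\<open>g\<close> is a convex function of \<open>Z\<close>, i.e. \<open>g \<circ> Z\<inverse>\<close> is convex: the determinant with rows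
  \<open>1\<close>, \<open>Z\<close>, \<open>g\<close> is nonnegative at any three increasing points.\<close>
definition rel_convex_on :: "real set \<Rightarrow> (real \<Rightarrow> real) \<Rightarrow> (real \<Rightarrow> real) \<Rightarrow> bool" where
  "rel_convex_on K Z g \<longleftrightarrow> strict_mono_on K Z \<and>
     (\<forall>x1\<in>K. \<forall>x2\<in>K. \<forall>x3\<in>K. x1 < x2 \<and> x2 < x3 \<longrightarrow>
        0 \<le> (Z x2 - Z x1) * (g x3 - g x1) - (Z x3 - Z x1) * (g x2 - g x1))"

definition chord_slope :: "(real \<Rightarrow> real) \<Rightarrow> (real \<Rightarrow> real) \<Rightarrow> real \<Rightarrow> real \<Rightarrow> real" where
  "chord_slope Z g x y = (g y - g x) / (Z y - Z x)"

lemma chord_slope_commute: "chord_slope Z g x y = chord_slope Z g y x"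
  unfolding chord_slope_def by (metis minus_diff_eq minus_divide_divide)

lemma chord_slope_sign:
  assumes "Z x < Z y"
  shows "chord_slope Z g x y < 0 \<longleftrightarrow> g y < g x" "0 < chord_slope Z g x y \<longleftrightarrow> g x < g y"
    and "chord_slope Z g x y = 0 \<longleftrightarrow> g x = g y"
  using assms unfolding chord_slope_def by (auto simp: divide_simps)

lemma chord_slope_times: "Z x \<noteq> Z y \<Longrightarrow> g y - g x = chord_slope Z g x y * (Z y - Z x)"
  unfolding chord_slope_def by simp

lemma chord_intercept_eq:
  fixes h h0 y y0 :: real
  assumes "y \<noteq> y0"
  shows "h - y * ((h - h0) / (y - y0)) = h * (- y0 / (y - y0)) + y * h0 / (y - y0)"
proof -
  define d where "d = y - y0"
  have "d \<noteq> 0" using assms d_def by simp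
  then have "h - y * ((h - h0) / d) = h * (- y0 / d) + y * h0 / d"
    by (simp add: field_simps, unfold d_def, algebra)
  then show ?thesis unfolding d_def .
qed

lemma rel_convex_on_less: "rel_convex_on K Z g \<Longrightarrow> x \<in> K \<Longrightarrow> y \<in> K \<Longrightarrow> x < y \<Longrightarrow> Z x < Z y"
  unfolding rel_convex_on_def by (auto dest: strict_mono_onD)

lemma rel_convex_on_subset: "rel_convex_on K Z g \<Longrightarrow> K' \<subseteq> K \<Longrightarrow> rel_convex_on K' Z g"
  unfolding rel_convex_on_def by (auto intro: monotone_on_subset)

lemma rel_convex_on_add_affine:
  assumes "rel_convex_on K Z g"
  shows "rel_convex_on K Z (\<lambda>x. g x + a + b * Z x)"
proof -
  have "(Z x2 - Z x1) * (g x3 + a + b * Z x3 - (g x1 + a + b * Z x1))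
          - (Z x3 - Z x1) * (g x2 + a + b * Z x2 - (g x1 + a + b * Z x1))
        = (Z x2 - Z x1) * (g x3 - g x1) - (Z x3 - Z x1) * (g x2 - g x1)" for x1 x2 x3
    by (simp add: algebra_simps)
  then show ?thesis using assms unfolding rel_convex_on_def by simp
qed

lemma rel_convex_on_three_chords:
  assumes conv: "rel_convex_on K Z g" and "x \<in> K" "y \<in> K" "w \<in> K" "x < y" "y < w"
  shows "chord_slope Z g x y \<le> chord_slope Z g x w" "chord_slope Z g x w \<le> chord_slope Z g y w"
proof -
  have Z: "Z x < Z y" "Z y < Z w" using rel_convex_on_less[OF conv] assms by auto
  have "0 \<le> (Z y - Z x) * (g w - g x) - (Z w - Z x) * (g y - g x)"
    using conv assms unfolding rel_convex_on_def by blast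
  then show "chord_slope Z g x y \<le> chord_slope Z g x w" "chord_slope Z g x w \<le> chord_slope Z g y w"
    using Z unfolding chord_slope_def by (simp_all add: divide_simps) (simp_all add: algebra_simps)
qed

lemma rel_convex_on_chord_slope_mono:
  assumes conv: "rel_convex_on K Z g" and K: "u \<in> K" "v \<in> K" "x \<in> K" "y \<in> K"
    and "u < v" "x < y" "u \<le> x" "v \<le> y"
  shows "chord_slope Z g u v \<le> chord_slope Z g x y"
proof -
  have "chord_slope Z g u v \<le> chord_slope Z g u y"
    using rel_convex_on_three_chords(1)[OF conv, of u v y] assms by (cases "v = y") auto
  also have "\<dots> \<le> chord_slope Z g x y"
    using rel_convex_on_three_chords(2)[OF conv, of u x y] assms by (cases "u = x") auto
  finally show ?thesis .
qed

definition const_or_strict_mono_on :: "real set \<Rightarrow> (real \<Rightarrow> real) \<Rightarrow> bool" where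
  "const_or_strict_mono_on S g \<longleftrightarrow>
     (\<exists>c. \<forall>x\<in>S. g x = c) \<or> strict_mono_on S g \<or> strict_antimono_on S g"

lemma const_or_strict_mono_on_cong:
  "(\<And>x. x \<in> S \<Longrightarrow> g x = h x) \<Longrightarrow> const_or_strict_mono_on S g \<longleftrightarrow> const_or_strict_mono_on S h"
  unfolding const_or_strict_mono_on_def monotone_on_def by auto

lemma const_or_strict_mono_on_sign_mult:
  assumes "s = 1 \<or> s = -1" and "const_or_strict_mono_on S (\<lambda>x. s * g x)"
  shows "const_or_strict_mono_on S g"
proof (cases "s = 1")
  case False
  then have g: "const_or_strict_mono_on S (\<lambda>x. - g x)" using assms by simp
  have "(\<exists>c. \<forall>x\<in>S. g x = c) \<longleftrightarrow> (\<exists>c. \<forall>x\<in>S. - g x = c)"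
    by (metis add.inverse_inverse)
  moreover have "strict_mono_on S (\<lambda>x. - g x) \<longleftrightarrow> strict_antimono_on S g"
    "strict_antimono_on S (\<lambda>x. - g x) \<longleftrightarrow> strict_mono_on S g"
    unfolding monotone_on_def by auto
  ultimately show ?thesis using g unfolding const_or_strict_mono_on_def by blast
qed (use assms in simp)

lemma rel_convex_on_const_or_strict_mono_at_left:
  assumes conv: "rel_convex_on K Z g" and K: "K = {x. p < x \<and> ereal x < q}" and "m \<in> K"
  shows "\<exists>b\<in>K. const_or_strict_mono_on {p<..<b} g"
proof -
  have sub: "u \<in> K" if "b \<in> K" "u \<in> {p<..<b}" for b u
    using K that by (auto simp: order_less_imp_le intro: le_less_trans[of "ereal u" "ereal b"])
  have slope: "chord_slope Z g u v \<le> chord_slope Z g x y"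
    if "u \<in> K" "v \<in> K" "x \<in> K" "y \<in> K" "u < v" "x < y" "u \<le> x" "v \<le> y" for u v x y
    by (rule rel_convex_on_chord_slope_mono[OF conv that])
  note sign = chord_slope_sign[where Z=Z and g=g, OF rel_convex_on_less[OF conv]]
  show ?thesis
  proof (cases "\<exists>x\<in>K. \<exists>y\<in>K. x < y \<and> g y < g x")
    case True
    then obtain x y where xy: "x \<in> K" "y \<in> K" "x < y" "g y < g x" by auto
    have "strict_antimono_on {p<..<x} g"
    proof (rule monotone_onI)
      fix u v assume uv: "u \<in> {p<..<x}" "v \<in> {p<..<x}" "u < v"
      then have "u \<in> K" "v \<in> K" using sub xy by auto
      then have "chord_slope Z g u v < 0"
        using slope[of u v x y] sign(1)[of x y] xy uv by fastforce
      then show "g v < g u" using sign(1) \<open>u \<in> K\<close> \<open>v \<in> K\<close> uv by blast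
    qed
    then show ?thesis using xy unfolding const_or_strict_mono_on_def by blast
  next
    case False
    then have incr: "g x \<le> g y" if "x \<in> K" "y \<in> K" "x < y" for x y using that by (meson not_le)
    show ?thesis
    proof (cases "\<exists>x\<in>K. \<exists>y\<in>K. x < y \<and> g x = g y")
      case True
      then obtain x y where xy: "x \<in> K" "y \<in> K" "x < y" "g x = g y" by auto
      have "g u = g x" if u: "u \<in> {p<..<x}" for u
      proof -
        have uK: "u \<in> K" using sub[OF xy(1) u] .
        have "chord_slope Z g u x \<le> 0"
          using slope[of u x x y] sign(3)[of x y] xy u uK by auto
        then have "g x \<le> g u" using sign(2)[OF uK xy(1)] u by fastforce
        then show ?thesis using incr[OF uK xy(1)] u by auto
      qed
      then show ?thesis using xy unfolding const_or_strict_mono_on_def by blast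
    next
      case False
      then have "strict_mono_on K g" using incr by (intro monotone_onI) (metis order_less_le)
      then have "strict_mono_on {p<..<m} g" by (rule monotone_on_subset) (use sub \<open>m \<in> K\<close> in blast)
      then show ?thesis using \<open>m \<in> K\<close> unfolding const_or_strict_mono_on_def by blast
    qed
  qed
qed

lemma rel_convex_on_const_or_strict_mono_at_right:
  assumes conv: "rel_convex_on K Z g" and K: "K = {x. p < x \<and> ereal x < q}" and "m \<in> K"
  shows "\<exists>a\<in>K. const_or_strict_mono_on {x. a < x \<and> ereal x < q} g"
proof -
  have sub: "u \<in> K" if "a \<in> K" "u \<in> {x. a < x \<and> ereal x < q}" for a u
    using K that by auto
  have slope: "chord_slope Z g u v \<le> chord_slope Z g x y"
    if "u \<in> K" "v \<in> K" "x \<in> K" "y \<in> K" "u < v" "x < y" "u \<le> x" "v \<le> y" for u v x y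
    by (rule rel_convex_on_chord_slope_mono[OF conv that])
  note sign = chord_slope_sign[where Z=Z and g=g, OF rel_convex_on_less[OF conv]]
  show ?thesis
  proof (cases "\<exists>x\<in>K. \<exists>y\<in>K. x < y \<and> g x < g y")
    case True
    then obtain x y where xy: "x \<in> K" "y \<in> K" "x < y" "g x < g y" by auto
    have "strict_mono_on {x. y < x \<and> ereal x < q} g"
    proof (rule monotone_onI)
      fix u v assume uv: "u \<in> {x. y < x \<and> ereal x < q}" "v \<in> {x. y < x \<and> ereal x < q}" "u < v"
      then have "u \<in> K" "v \<in> K" using sub xy by auto
      then have "0 < chord_slope Z g u v"
        using slope[of x y u v] sign(2)[of x y] xy uv by fastforce
      then show "g u < g v" using sign(2) \<open>u \<in> K\<close> \<open>v \<in> K\<close> uv by blast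
    qed
    then show ?thesis using xy unfolding const_or_strict_mono_on_def by blast
  next
    case False
    then have decr: "g y \<le> g x" if "x \<in> K" "y \<in> K" "x < y" for x y using that by (meson not_le)
    show ?thesis
    proof (cases "\<exists>x\<in>K. \<exists>y\<in>K. x < y \<and> g x = g y")
      case True
      then obtain x y where xy: "x \<in> K" "y \<in> K" "x < y" "g x = g y" by auto
      have "g u = g y" if u: "u \<in> {x. y < x \<and> ereal x < q}" for u
      proof -
        have uK: "u \<in> K" using sub[OF xy(2) u] .
        have "0 \<le> chord_slope Z g y u"
          using slope[of x y y u] sign(3)[of x y] xy u uK by auto
        then have "g y \<le> g u" using sign(1)[OF xy(2) uK] u by fastforce
        then show ?thesis using decr[OF xy(2) uK] u by auto
      qed
      then show ?thesis using xy unfolding const_or_strict_mono_on_def by blast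
    next
      case False
      then have "strict_antimono_on K g" using decr by (intro monotone_onI) (metis order_less_le)
      then have "strict_antimono_on {x. m < x \<and> ereal x < q} g"
        by (rule monotone_on_subset) (use sub \<open>m \<in> K\<close> in blast)
      then show ?thesis using \<open>m \<in> K\<close> unfolding const_or_strict_mono_on_def by blast
    qed
  qed
qed

lemma const_or_strict_mono_on_tendsto_left_filter:
  assumes x0: "x0 \<noteq> -\<infinity>" and a: "ereal a < x0"
    and g: "const_or_strict_mono_on {x. a < x \<and> ereal x < x0} g"
  shows "\<exists>L. ((\<lambda>x. ereal (g x)) \<longlongrightarrow> L) (left_filter x0 D)"
  using g unfolding const_or_strict_mono_on_def
proof (elim disjE exE)
  fix c assume "\<forall>x\<in>{x. a < x \<and> ereal x < x0}. g x = c"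
  then have "eventually (\<lambda>x. ereal (g x) = ereal c) (left_filter x0 D)"
    unfolding eventually_left_filter[OF x0] using a by auto
  then show ?thesis by (blast intro: tendsto_eventually)
next
  assume "strict_mono_on {x. a < x \<and> ereal x < x0} g"
  then show ?thesis using mono_on_tendsto_left_filter[OF x0 a] strict_mono_on_imp_mono_on by blast
next
  assume "strict_antimono_on {x. a < x \<and> ereal x < x0} g"
  then have "mono_on {x. a < x \<and> ereal x < x0} (\<lambda>x. - g x)"
    unfolding monotone_on_def by (auto simp: order_le_less)
  then have "((\<lambda>x. - ereal (- g x)) \<longlongrightarrow> - (SUP x\<in>{x. a < x \<and> ereal x < x0}. ereal (- g x))) (left_filter x0 D)"
    by (intro tendsto_uminus_ereal mono_on_tendsto_left_filter[OF x0 a])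
  then show ?thesis by auto
qed

lemma moebius_chord_identity:
  fixes c1 c2 Y1 Y2 Y3 G1 G2 G3 :: real
  defines "l \<equiv> \<lambda>Y. c1 + c2 * Y" and "M \<equiv> \<lambda>Y. (c1 * Y - c2) / (c1 + c2 * Y)"
  assumes "l Y1 \<noteq> 0" "l Y2 \<noteq> 0" "l Y3 \<noteq> 0"
  shows "(M Y2 - M Y1) * (G3 / l Y3 - G1 / l Y1) - (M Y3 - M Y1) * (G2 / l Y2 - G1 / l Y1)
       = (c1\<^sup>2 + c2\<^sup>2) * ((Y2 - Y1) * (G3 - G1) - (Y3 - Y1) * (G2 - G1)) / (l Y1 * l Y2 * l Y3)"
proof -
  have M: "M Yb - M Ya = (c1\<^sup>2 + c2\<^sup>2) * (Yb - Ya) / (l Ya * l Yb)" if "l Ya \<noteq> 0" "l Yb \<noteq> 0" for Ya Yb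
    using that unfolding l_def M_def by (simp add: field_simps power2_eq_square)
  have key: "(Y2 - Y1) * (G3 * l Y1 - G1 * l Y3) - (Y3 - Y1) * (G2 * l Y1 - G1 * l Y2)
           = l Y1 * ((Y2 - Y1) * (G3 - G1) - (Y3 - Y1) * (G2 - G1))"
    unfolding l_def by algebra
  show ?thesis
    using assms(3-5) unfolding M[OF assms(3,4)] M[OF assms(3,5)]
    by (simp add: divide_simps) (use key in algebra)
qed

text \<open>Dividing by a positive affine function \<open>c1 + c2 Z\<close> and reparametrising by the
  Moebius transform of \<open>Z\<close> preserves relative convexity: the defining determinant only
  gets multiplied by \<open>(c1\<^sup>2 + c2\<^sup>2) / \<Prod>(c1 + c2 Z xi)\<close>.\<close>
lemma rel_convex_on_moebius:
  assumes conv: "rel_convex_on K Z g" and c: "c1 \<noteq> 0 \<or> c2 \<noteq> 0"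
    and pos: "\<And>x. x \<in> K \<Longrightarrow> 0 < c1 + c2 * Z x"
  shows "rel_convex_on K (\<lambda>x. (c1 * Z x - c2) / (c1 + c2 * Z x)) (\<lambda>x. g x / (c1 + c2 * Z x))"
proof -
  have k: "0 < c1\<^sup>2 + c2\<^sup>2" using c by (simp add: sum_power2_gt_zero_iff)
  have ne: "c1 + c2 * Z x \<noteq> 0" if "x \<in> K" for x using pos[OF that] by simp
  show ?thesis
    unfolding rel_convex_on_def
  proof (intro conjI ballI impI monotone_onI)
    fix x y assume xy: "x \<in> K" "y \<in> K" "x < y"
    have "0 < (c1\<^sup>2 + c2\<^sup>2) * (Z y - Z x) / ((c1 + c2 * Z x) * (c1 + c2 * Z y))"
      using k rel_convex_on_less[OF conv xy] pos xy by simp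
    also have "\<dots> = (c1 * Z y - c2) / (c1 + c2 * Z y) - (c1 * Z x - c2) / (c1 + c2 * Z x)"
      using ne xy by (simp add: field_simps power2_eq_square)
    finally show "(c1 * Z x - c2) / (c1 + c2 * Z x) < (c1 * Z y - c2) / (c1 + c2 * Z y)" by simp
  next
    fix x1 x2 x3 assume xs: "x1 \<in> K" "x2 \<in> K" "x3 \<in> K" "x1 < x2 \<and> x2 < x3"
    have "0 \<le> (Z x2 - Z x1) * (g x3 - g x1) - (Z x3 - Z x1) * (g x2 - g x1)"
      using conv xs unfolding rel_convex_on_def by blast
    moreover have "0 < (c1 + c2 * Z x1) * (c1 + c2 * Z x2) * (c1 + c2 * Z x3)"
      using pos xs by simp
    ultimately have "0 \<le> (c1\<^sup>2 + c2\<^sup>2) * ((Z x2 - Z x1) * (g x3 - g x1) - (Z x3 - Z x1) * (g x2 - g x1))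
        / ((c1 + c2 * Z x1) * (c1 + c2 * Z x2) * (c1 + c2 * Z x3))"
      using k by (intro divide_nonneg_pos mult_nonneg_nonneg) auto
    then show "0 \<le> ((c1 * Z x2 - c2) / (c1 + c2 * Z x2) - (c1 * Z x1 - c2) / (c1 + c2 * Z x1)) *
        (g x3 / (c1 + c2 * Z x3) - g x1 / (c1 + c2 * Z x1)) -
        ((c1 * Z x3 - c2) / (c1 + c2 * Z x3) - (c1 * Z x1 - c2) / (c1 + c2 * Z x1)) *
        (g x2 / (c1 + c2 * Z x2) - g x1 / (c1 + c2 * Z x1))"
      using moebius_chord_identity[of c1 c2 "Z x1" "Z x2" "Z x3" "g x3" "g x1" "g x2"] ne xs by simp
  qed
qed

lemma rel_convex_on_quotient:
  assumes conv: "rel_convex_on K Z g" and c: "c1 \<noteq> 0 \<or> c2 \<noteq> 0"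
    and sign: "(\<forall>x\<in>K. 0 < c1 + c2 * Z x) \<or> (\<forall>x\<in>K. c1 + c2 * Z x < 0)"
  obtains s Z' where "s = 1 \<or> s = -1" "rel_convex_on K Z' (\<lambda>x. s * (g x / (c1 + c2 * Z x)))"
  using sign
proof
  assume "\<forall>x\<in>K. 0 < c1 + c2 * Z x"
  then show thesis using that[of 1] rel_convex_on_moebius[OF conv c] by simp
next
  assume neg: "\<forall>x\<in>K. c1 + c2 * Z x < 0"
  have "rel_convex_on K (\<lambda>x. (- c1 * Z x - - c2) / (- c1 + - c2 * Z x)) (\<lambda>x. g x / (- c1 + - c2 * Z x))"
    using neg c by (intro rel_convex_on_moebius[OF conv]) auto
  moreover have "g x / (- c1 + - c2 * Z x) = -1 * (g x / (c1 + c2 * Z x))" for x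
    by (simp add: divide_minus_right[symmetric] algebra_simps)
  ultimately show thesis using that[of "-1"] by simp
qed

lemma rel_convex_on_lipschitz_on:
  assumes conv: "rel_convex_on K Z g" and Z: "L-lipschitz_on {a..b} Z"
    and K: "a' \<in> K" "b' \<in> K" "{a..b} \<subseteq> K" and "a' < a" "b < b'"
  obtains M where "M-lipschitz_on {a..b} g"
proof -
  define M where "M = max \<bar>chord_slope Z g a' a\<bar> \<bar>chord_slope Z g b b'\<bar>"
  have bound: "\<bar>g v - g u\<bar> \<le> M * \<bar>Z v - Z u\<bar>" if uv: "u \<in> {a..b}" "v \<in> {a..b}" "u < v" for u v
  proof -
    have ab: "a \<in> K" "b \<in> K" "u \<in> K" "v \<in> K" using uv K by auto
    have "chord_slope Z g a' a \<le> chord_slope Z g u v" "chord_slope Z g u v \<le> chord_slope Z g b b'"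
      using rel_convex_on_chord_slope_mono[OF conv] ab K uv assms(6,7) by auto
    then have "\<bar>chord_slope Z g u v\<bar> \<le> M" unfolding M_def by auto
    moreover have "Z u < Z v" using rel_convex_on_less[OF conv] ab uv by auto
    ultimately show ?thesis
      using chord_slope_times[of Z u v g] by (simp add: abs_mult mult_right_mono)
  qed
  have "(M * L)-lipschitz_on {a..b} g"
  proof (rule lipschitz_onI)
    fix u v assume uv: "u \<in> {a..b}" "v \<in> {a..b}"
    have "\<bar>g v - g u\<bar> \<le> M * \<bar>Z v - Z u\<bar>"
      using bound[OF uv] bound[OF uv(2,1)] by (cases u v rule: linorder_cases) (auto simp: abs_minus_commute)
    also have "\<dots> \<le> M * (L * \<bar>v - u\<bar>)"
      using lipschitz_onD[OF Z uv(2,1)] by (intro mult_left_mono) (auto simp: dist_real_def M_def)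
    finally show "dist (g u) (g v) \<le> M * L * dist u v"
      by (simp add: dist_real_def abs_minus_commute)
  qed (use lipschitz_on_nonneg[OF Z] in \<open>simp add: M_def\<close>)
  then show thesis by (rule that)
qed

section \<open>One-sided slopes and differentiability\<close>

lemma countable_if_disjoint_gaps:
  fixes A B :: "real \<Rightarrow> real"
  assumes gap: "\<And>t. t \<in> S \<Longrightarrow> A t < B t"
    and disjoint: "\<And>s t. s \<in> S \<Longrightarrow> t \<in> S \<Longrightarrow> s < t \<Longrightarrow> B s \<le> A t"
  shows "countable S"
proof -
  have "\<forall>t\<in>S. \<exists>r. r \<in> \<rat> \<and> A t < r \<and> r < B t" using Rats_dense_in_real gap by blast
  then obtain q where q: "\<And>t. t \<in> S \<Longrightarrow> q t \<in> \<rat> \<and> A t < q t \<and> q t < B t" by metis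
  have "q s < q t" if "s \<in> S" "t \<in> S" "s < t" for s t
    using q[OF that(1)] q[OF that(2)] disjoint[OF that] by linarith
  then have "inj_on q S"
    by (intro inj_onI) (metis linorder_cases order_less_irrefl)
  moreover have "countable (q ` S)" using q by (intro countable_subset[OF _ countable_rat]) auto
  ultimately show ?thesis using countable_image_inj_on by blast
qed

lemma open_real_neighbours:
  fixes K :: "real set"
  assumes "open K" "t \<in> K"
  obtains a b where "a \<in> K" "b \<in> K" "a < t" "t < b"
proof -
  obtain e where e: "e > 0" "ball t e \<subseteq> K" using assms open_contains_ball by blast
  then have "t - e / 2 \<in> K" "t + e / 2 \<in> K" by (auto simp: dist_real_def subset_iff)
  then show thesis using that e(1) by simp
qed

lemma tendsto_chord_slope_deriv_quotient:
  assumes "(g has_real_derivative g') (at s)" "(Z has_real_derivative Z') (at s)" "Z' \<noteq> 0"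
  shows "((\<lambda>x. chord_slope Z g s x) \<longlongrightarrow> g' / Z') (at s)"
proof -
  have "((\<lambda>x. ((g x - g s) / (x - s)) / ((Z x - Z s) / (x - s))) \<longlongrightarrow> g' / Z') (at s)"
    using assms by (intro tendsto_divide) (auto simp: has_field_derivative_iff)
  moreover have "eventually (\<lambda>x. ((g x - g s) / (x - s)) / ((Z x - Z s) / (x - s)) = chord_slope Z g s x) (at s)"
    by (auto simp: eventually_at_filter chord_slope_def)
  ultimately show ?thesis by (rule Lim_transform_eventually)
qed

definition right_slope :: "real set \<Rightarrow> (real \<Rightarrow> real) \<Rightarrow> (real \<Rightarrow> real) \<Rightarrow> real \<Rightarrow> real" where
  "right_slope K Z g t = Inf ((\<lambda>b. chord_slope Z g t b) ` ({t<..} \<inter> K))"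

definition left_slope :: "real set \<Rightarrow> (real \<Rightarrow> real) \<Rightarrow> (real \<Rightarrow> real) \<Rightarrow> real \<Rightarrow> real" where
  "left_slope K Z g t = Sup ((\<lambda>a. chord_slope Z g a t) ` ({..<t} \<inter> K))"

context
  fixes K :: "real set" and Z g :: "real \<Rightarrow> real"
  assumes conv: "rel_convex_on K Z g" and open_K: "open K"
begin

lemma rel_convex_on_slopes_le:
  assumes "a \<in> K" "t \<in> K" "b \<in> K" "a < t" "t < b"
  shows "chord_slope Z g a t \<le> chord_slope Z g t b"
  using rel_convex_on_chord_slope_mono[OF conv] assms by auto

lemma right_slope_le_chord_slope:
  assumes "s \<in> K" "t \<in> K" "s < t"
  shows "right_slope K Z g s \<le> chord_slope Z g s t"
proof -
  obtain a where "a \<in> K" "a < s" using open_real_neighbours[OF open_K assms(1)] by metis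
  then have "bdd_below ((\<lambda>b. chord_slope Z g s b) ` ({s<..} \<inter> K))"
    using rel_convex_on_slopes_le assms(1) by (intro bdd_belowI2[where m = "chord_slope Z g a s"]) auto
  then show ?thesis unfolding right_slope_def using assms by (intro cInf_lower) auto
qed

lemma chord_slope_le_left_slope:
  assumes "s \<in> K" "t \<in> K" "s < t"
  shows "chord_slope Z g s t \<le> left_slope K Z g t"
proof -
  obtain b where "b \<in> K" "t < b" using open_real_neighbours[OF open_K assms(2)] by metis
  then have "bdd_above ((\<lambda>a. chord_slope Z g a t) ` ({..<t} \<inter> K))"
    using rel_convex_on_slopes_le assms(2) by (intro bdd_aboveI2[where M = "chord_slope Z g t b"]) auto
  then show ?thesis unfolding left_slope_def using assms by (intro cSup_upper) auto
qed

lemma left_slope_le_right_slope: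
  assumes t: "t \<in> K"
  shows "left_slope K Z g t \<le> right_slope K Z g t"
proof -
  obtain a b where ab: "a \<in> K" "b \<in> K" "a < t" "t < b" using open_real_neighbours[OF open_K t] .
  have "left_slope K Z g t \<le> chord_slope Z g t b" if "b \<in> K" "t < b" for b
    unfolding left_slope_def using ab that t rel_convex_on_slopes_le by (intro cSup_least) auto
  then show ?thesis unfolding right_slope_def using ab by (intro cInf_greatest) auto
qed

lemma tendsto_right_slope:
  assumes t: "t \<in> K"
  shows "((\<lambda>b. chord_slope Z g t b) \<longlongrightarrow> right_slope K Z g t) (at_right t)"
proof -
  obtain a where a: "a \<in> K" "a < t" using open_real_neighbours[OF open_K t] by metis
  have "at_right t = at t within ({t<..} \<inter> K)"
    by (rule at_within_nhd[OF t open_K]) auto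
  moreover have "((\<lambda>b. chord_slope Z g t b) \<longlongrightarrow> right_slope K Z g t) (at t within ({t<..} \<inter> K))"
    unfolding right_slope_def
  proof (rule Lim_right_bound)
    show "chord_slope Z g a t \<le> chord_slope Z g t b" if "b \<in> K" "t < b" for b
      using rel_convex_on_slopes_le a t that by auto
    show "chord_slope Z g t b \<le> chord_slope Z g t c" if "b \<in> K" "c \<in> K" "t < b" "b \<le> c" for b c
      using rel_convex_on_chord_slope_mono[OF conv t that(1) t that(2)] that by (cases "b = c") auto
  qed
  ultimately show ?thesis by simp
qed

lemma tendsto_left_slope:
  assumes t: "t \<in> K"
  shows "((\<lambda>a. chord_slope Z g a t) \<longlongrightarrow> left_slope K Z g t) (at_left t)"
proof -
  obtain b where b: "b \<in> K" "t < b" using open_real_neighbours[OF open_K t] by metis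
  have "at_left t = at t within ({..<t} \<inter> K)"
    by (rule at_within_nhd[OF t open_K]) auto
  moreover have "((\<lambda>a. chord_slope Z g a t) \<longlongrightarrow> left_slope K Z g t) (at t within ({..<t} \<inter> K))"
    unfolding left_slope_def
  proof (rule Lim_left_bound)
    show "chord_slope Z g a t \<le> chord_slope Z g t b" if "a \<in> K" "a < t" for a
      using rel_convex_on_slopes_le b t that by auto
    show "chord_slope Z g a t \<le> chord_slope Z g c t" if "a \<in> K" "c \<in> K" "c < t" "a \<le> c" for a c
      using rel_convex_on_chord_slope_mono[OF conv that(1) t that(2) t] that by (cases "a = c") auto
  qed
  ultimately show ?thesis by simp
qed

lemma has_real_derivative_if_left_slope_eq_right_slope:
  assumes t: "t \<in> K" and Z: "(Z has_real_derivative Z') (at t)"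
    and eq: "left_slope K Z g t = right_slope K Z g t"
  shows "(g has_real_derivative right_slope K Z g t * Z') (at t)"
proof -
  have "((\<lambda>x. chord_slope Z g t x) \<longlongrightarrow> right_slope K Z g t) (at t)"
    using tendsto_left_slope[OF t] tendsto_right_slope[OF t] eq
    by (simp add: chord_slope_commute[of Z g _ t] filterlim_at_split)
  then have "((\<lambda>x. chord_slope Z g t x * ((Z x - Z t) / (x - t))) \<longlongrightarrow> right_slope K Z g t * Z') (at t)"
    using Z by (intro tendsto_mult) (simp_all add: has_field_derivative_iff)
  moreover have "eventually (\<lambda>x. chord_slope Z g t x * ((Z x - Z t) / (x - t)) = (g x - g t) / (x - t)) (at t)"
    using eventually_at_in_open[OF open_K t]
  proof eventually_elim
    case (elim x)
    then have "Z x \<noteq> Z t"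
      using rel_convex_on_less[OF conv, of x t] rel_convex_on_less[OF conv, of t x] t
      by (cases x t rule: linorder_cases) auto
    then show ?case using elim by (simp add: chord_slope_def)
  qed
  ultimately show ?thesis unfolding has_field_derivative_iff by (rule Lim_transform_eventually)
qed

text \<open>Each point of non-differentiability carries the nonempty gap between the left and the
  right slope, and these gaps are disjoint.\<close>
lemma rel_convex_on_countable_not_differentiable:
  assumes "\<And>t. t \<in> K \<Longrightarrow> Z differentiable (at t)"
  shows "countable {t \<in> K. \<not> g differentiable (at t)}"
proof (rule countable_if_disjoint_gaps[where A = "left_slope K Z g" and B = "right_slope K Z g"])
  fix t assume t: "t \<in> {t \<in> K. \<not> g differentiable (at t)}"
  then obtain Z' where "(Z has_real_derivative Z') (at t)"
    using assms real_differentiable_def by blast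
  then have "left_slope K Z g t \<noteq> right_slope K Z g t"
    using has_real_derivative_if_left_slope_eq_right_slope t real_differentiable_def by blast
  then show "left_slope K Z g t < right_slope K Z g t"
    using left_slope_le_right_slope t by fastforce
next
  fix s t assume "s \<in> {t \<in> K. \<not> g differentiable (at t)}" "t \<in> {t \<in> K. \<not> g differentiable (at t)}" "s < t"
  then show "right_slope K Z g s \<le> left_slope K Z g t"
    using right_slope_le_chord_slope[of s t] chord_slope_le_left_slope[of s t] by simp
qed

lemma deriv_quotient_le_chord_slope:
  assumes "s \<in> K" "t \<in> K" "s < t" "(g has_real_derivative g') (at s)"
    and "(Z has_real_derivative Z') (at s)" "Z' \<noteq> 0"
  shows "g' / Z' \<le> chord_slope Z g s t"
proof (rule tendsto_upperbound)
  show "((\<lambda>x. chord_slope Z g s x) \<longlongrightarrow> g' / Z') (at_right s)"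
    using tendsto_chord_slope_deriv_quotient[OF assms(4-6)] by (rule tendsto_within_subset) simp
  have "eventually (\<lambda>x. x \<in> K) (at_right s)"
    using eventually_at_in_open'[OF open_K assms(1)] by (rule filter_leD[rotated]) (simp add: at_le)
  then show "eventually (\<lambda>x. chord_slope Z g s x \<le> chord_slope Z g s t) (at_right s)"
    using eventually_at_right_real[OF assms(3)]
  proof eventually_elim
    case (elim x)
    then show ?case using rel_convex_on_three_chords(1)[OF conv assms(1) _ assms(2)] by simp
  qed
qed simp

lemma chord_slope_le_deriv_quotient:
  assumes "s \<in> K" "t \<in> K" "s < t" "(g has_real_derivative g') (at t)"
    and "(Z has_real_derivative Z') (at t)" "Z' \<noteq> 0"
  shows "chord_slope Z g s t \<le> g' / Z'"
proof (rule tendsto_lowerbound)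
  show "((\<lambda>x. chord_slope Z g t x) \<longlongrightarrow> g' / Z') (at_left t)"
    using tendsto_chord_slope_deriv_quotient[OF assms(4-6)] by (rule tendsto_within_subset) simp
  have "eventually (\<lambda>x. x \<in> K) (at_left t)"
    using eventually_at_in_open'[OF open_K assms(2)] by (rule filter_leD[rotated]) (simp add: at_le)
  then show "eventually (\<lambda>x. chord_slope Z g s t \<le> chord_slope Z g t x) (at_left t)"
    using eventually_at_left_real[OF assms(3)]
  proof eventually_elim
    case (elim x)
    then have "chord_slope Z g s t \<le> chord_slope Z g x t"
      using rel_convex_on_three_chords(2)[OF conv assms(1) _ assms(2)] by simp
    then show ?case by (simp add: chord_slope_commute[of Z g x t])
  qed
qed simp

end

section \<open>The Wronskian pair\<close>

text \<open>The intervals \<open>I = [T, x0)\<close> and \<open>J = (T, x0)\<close> are parameters pinned down by equations,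
  so that the local definitions of the main theorem instantiate them directly.\<close>
locale wronskian_pair =
  fixes x0 :: ereal and T :: real and I J :: "real set" and \<phi>1 \<phi>2 \<phi>1' \<phi>2' :: "real \<Rightarrow> real"
  assumes I_eq: "I = {x. T \<le> x \<and> ereal x < x0}" and J_eq: "J = {x. T < x \<and> ereal x < x0}"
    and x0_not_MInf: "x0 \<noteq> -\<infinity>" and T_less_x0: "ereal T < x0"
    and \<phi>1_deriv: "\<And>x. x \<in> I \<Longrightarrow> (\<phi>1 has_real_derivative \<phi>1' x) (at x within I)"
    and \<phi>2_deriv: "\<And>x. x \<in> I \<Longrightarrow> (\<phi>2 has_real_derivative \<phi>2' x) (at x within I)"
    and \<phi>1'_cont: "continuous_on I \<phi>1'" and \<phi>2'_cont: "continuous_on I \<phi>2'"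
    and \<phi>2_small: "\<phi>2 \<in> o[left_filter x0 I](\<phi>1)"
    and \<phi>1_pos: "\<And>x. x \<in> I \<Longrightarrow> 0 < \<phi>1 x"
    and \<phi>2_nonzero: "\<And>x. x \<in> I \<Longrightarrow> \<phi>2 x \<noteq> 0"
    and wronskian_pos: "\<And>x. x \<in> I \<Longrightarrow> 0 < \<phi>1 x * \<phi>2' x - \<phi>1' x * \<phi>2 x"
begin

lemma T_in_I: "T \<in> I"
  using T_less_x0 I_eq by simp

lemma J_subset_I: "J \<subseteq> I"
  unfolding I_eq J_eq by auto

lemma in_J_between: "a \<in> J \<Longrightarrow> b \<in> J \<Longrightarrow> a \<le> x \<Longrightarrow> x \<le> b \<Longrightarrow> x \<in> J"
  unfolding J_eq using ereal_le_less_trans[of x b x0] by auto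

lemma in_I_between: "a \<in> I \<Longrightarrow> b \<in> I \<Longrightarrow> a \<le> x \<Longrightarrow> x \<le> b \<Longrightarrow> x \<in> I"
  unfolding I_eq using ereal_le_less_trans[of x b x0] by auto

lemma Icc_subset_I: "a \<in> I \<Longrightarrow> b \<in> I \<Longrightarrow> {a..b} \<subseteq> I"
  using in_I_between[of a b] by auto

lemma Icc_subset_J: "a \<in> J \<Longrightarrow> b \<in> J \<Longrightarrow> {a..b} \<subseteq> J"
  using in_J_between[of a b] by auto

lemma J_nonempty: obtains m where "m \<in> J"
  using real_between_ereal[OF T_less_x0] J_eq by auto

lemma open_J: "open J"
proof (cases x0)
  case (real r)
  then have "J = {T<..<r}" unfolding J_eq by auto
  then show ?thesis by simp
next
  case PInf
  then have "J = {T<..}" unfolding J_eq by auto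
  then show ?thesis by simp
qed (use x0_not_MInf in auto)

lemma at_within_I: "x \<in> J \<Longrightarrow> at x within I = at x"
  using at_within_open_subset[OF _ open_J J_subset_I] .

lemma \<phi>1_deriv_at: "x \<in> J \<Longrightarrow> (\<phi>1 has_real_derivative \<phi>1' x) (at x)"
  using \<phi>1_deriv at_within_I J_subset_I by fastforce

lemma \<phi>2_deriv_at: "x \<in> J \<Longrightarrow> (\<phi>2 has_real_derivative \<phi>2' x) (at x)"
  using \<phi>2_deriv at_within_I J_subset_I by fastforce

lemma lipschitz_on_Icc_if_C1:
  assumes "\<And>x. x \<in> I \<Longrightarrow> (F has_real_derivative F' x) (at x within I)" "continuous_on I F'"
    and "{a..b} \<subseteq> I"
  obtains L where "L-lipschitz_on {a..b} F"
proof -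
  have "(F has_real_derivative F' x) (at x within {a..b})" if "x \<in> {a..b}" for x
    using has_field_derivative_subset[OF assms(1) assms(3)] that assms(3) by blast
  then show thesis using C1_imp_lipschitz_on_Icc continuous_on_subset[OF assms(2,3)] that by blast
qed

definition Y :: "real \<Rightarrow> real" where
  "Y x = \<phi>2 x / \<phi>1 x"

definition Y' :: "real \<Rightarrow> real" where
  "Y' x = (\<phi>1 x * \<phi>2' x - \<phi>1' x * \<phi>2 x) / (\<phi>1 x)\<^sup>2"

lemma Y_deriv:
  assumes x: "x \<in> I"
  shows "(Y has_real_derivative Y' x) (at x within I)"
proof -
  have "(Y has_real_derivative (\<phi>2' x * \<phi>1 x - \<phi>2 x * \<phi>1' x) / (\<phi>1 x * \<phi>1 x)) (at x within I)"
    unfolding Y_def[abs_def] using DERIV_divide[OF \<phi>2_deriv[OF x] \<phi>1_deriv[OF x]] \<phi>1_pos[OF x] by simp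
  moreover have "(\<phi>2' x * \<phi>1 x - \<phi>2 x * \<phi>1' x) / (\<phi>1 x * \<phi>1 x) = Y' x"
    unfolding Y'_def by (simp add: power2_eq_square algebra_simps)
  ultimately show ?thesis by simp
qed

lemma Y_deriv_at: "x \<in> J \<Longrightarrow> (Y has_real_derivative Y' x) (at x)"
  using Y_deriv at_within_I J_subset_I by fastforce

lemma Y_cont: "continuous_on I Y"
  by (rule DERIV_continuous_on[OF Y_deriv])

lemma Y'_pos: "x \<in> I \<Longrightarrow> 0 < Y' x"
  unfolding Y'_def using wronskian_pos[of x] \<phi>1_pos[of x] by simp

lemma Y'_cont: "continuous_on I Y'"
  unfolding Y'_def[abs_def] using \<phi>1_pos
  by (intro continuous_intros \<phi>1'_cont \<phi>2'_cont DERIV_continuous_on[OF \<phi>1_deriv]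
      DERIV_continuous_on[OF \<phi>2_deriv]) (auto dest: \<phi>1_pos)

lemma Y_strict_mono: "strict_mono_on I Y"
proof (intro monotone_onI)
  fix x y assume xy: "x \<in> I" "y \<in> I" "x < y"
  show "Y x < Y y"
  proof (rule DERIV_pos_imp_increasing_open[OF xy(3)])
    fix z assume "x < z" "z < y"
    then have "T < z" "ereal z < x0" using xy ereal_le_less_trans[of z y x0] I_eq by auto
    then have "z \<in> J" using J_eq by simp
    then show "\<exists>d. (Y has_real_derivative d) (at z) \<and> 0 < d"
      using Y_deriv_at[of z] Y'_pos[of z] J_subset_I by blast
  next
    show "continuous_on {x..y} Y"
      using continuous_on_subset[OF Y_cont Icc_subset_I[OF xy(1,2)]] .
  qed
qed

lemma Y_tendsto_0: "(Y \<longlongrightarrow> 0) (left_filter x0 I)"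
  unfolding Y_def[abs_def] by (rule smalloD_tendsto[OF \<phi>2_small])

text \<open>\<open>Y\<close> increases to its limit \<open>0\<close>.\<close>
lemma Y_neg: "x \<in> I \<Longrightarrow> Y x < 0"
proof (rule ccontr)
  assume x: "x \<in> I" and "\<not> Y x < 0"
  moreover have "Y x \<noteq> 0" unfolding Y_def using \<phi>1_pos[OF x] \<phi>2_nonzero[OF x] by auto
  ultimately have "0 < Y x" by auto
  then have "eventually (\<lambda>z. Y z < Y x) (left_filter x0 I)" by (rule order_tendstoD(2)[OF Y_tendsto_0])
  then obtain a where a: "ereal a < x0" "\<forall>z\<in>I. a < z \<and> ereal z < x0 \<longrightarrow> Y z < Y x"
    unfolding eventually_left_filter[OF x0_not_MInf] by blast
  have "ereal (max a x) < x0" using a x I_eq by (auto simp: max_def)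
  then obtain z where z: "max a x < z" "ereal z < x0" using real_between_ereal by blast
  then have z_I: "z \<in> I" using x I_eq by auto
  then have "Y z < Y x" using a z by auto
  moreover have "Y x < Y z" using strict_mono_onD[OF Y_strict_mono x z_I] z by simp
  ultimately show False by simp
qed

lemma affine_Y_sign_near_T:
  assumes c: "c1 \<noteq> 0 \<or> c2 \<noteq> 0"
  obtains b where "b \<in> J" "(\<forall>x\<in>{T<..<b}. 0 < c1 + c2 * Y x) \<or> (\<forall>x\<in>{T<..<b}. c1 + c2 * Y x < 0)"
proof -
  obtain m where m: "m \<in> J" using J_nonempty .
  have sub: "x \<in> I" if "b \<in> J" "x \<in> {T<..<b}" for b x
    using that J_subset_I in_I_between[OF T_in_I, of b x] by auto
  obtain b s where b: "b \<in> J" and s: "\<forall>x\<in>{T<..<b}. 0 < s * (c1 + c2 * Y x)"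
  proof (cases "c1 + c2 * Y T = 0")
    case True
    have "0 < c2 * (c1 + c2 * Y x)" if "x \<in> {T<..<m}" for x
    proof -
      have "Y T < Y x" using strict_mono_onD[OF Y_strict_mono T_in_I sub[OF m that]] that by auto
      moreover have "c2 \<noteq> 0" using True c by auto
      ultimately have "0 < c2\<^sup>2 * (Y x - Y T)" by simp
      also have "\<dots> = c2 * (c1 + c2 * Y x)"
        using True by (simp add: eq_neg_iff_add_eq_0[symmetric] algebra_simps power2_eq_square)
      finally show ?thesis .
    qed
    then show thesis using that m by blast
  next
    case False
    define v where "v = c1 + c2 * Y T"
    have "((\<lambda>x. v * (c1 + c2 * Y x)) \<longlongrightarrow> v * v) (at T within I)"
      unfolding v_def using DERIV_continuous[OF Y_deriv[OF T_in_I]]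
      by (intro tendsto_intros) (simp add: continuous_within)
    moreover have "0 < v * v" using False v_def by (metis not_real_square_gt_zero)
    ultimately have "eventually (\<lambda>x. 0 < v * (c1 + c2 * Y x)) (at T within I)"
      by (rule order_tendstoD(1))
    then obtain d where d: "d > 0" "\<And>x. x \<in> I \<Longrightarrow> x \<noteq> T \<Longrightarrow> dist x T < d \<Longrightarrow> 0 < v * (c1 + c2 * Y x)"
      unfolding eventually_at by blast
    define b where "b = min (T + d) m"
    have "T < b" "b \<le> m" using d m J_eq by (auto simp: b_def)
    then have "b \<in> J" using m J_eq ereal_le_less_trans[of b m x0] by auto
    moreover have "0 < v * (c1 + c2 * Y x)" if "x \<in> {T<..<b}" for x
      using d(2)[OF sub[OF \<open>b \<in> J\<close> that]] that by (auto simp: b_def dist_real_def)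
    ultimately show thesis using that by blast
  qed
  then show thesis using that[OF b] sign_cases_if_pos_mult[OF s] by blast
qed

lemma affine_Y_sign_near_x0:
  assumes c: "c1 \<noteq> 0 \<or> c2 \<noteq> 0"
  obtains a where "a \<in> J"
    "(\<forall>x\<in>{x. a < x \<and> ereal x < x0}. 0 < c1 + c2 * Y x) \<or> (\<forall>x\<in>{x. a < x \<and> ereal x < x0}. c1 + c2 * Y x < 0)"
proof -
  obtain s where s: "eventually (\<lambda>x. 0 < s * (c1 + c2 * Y x)) (left_filter x0 I)"
  proof (cases "c1 = 0")
    case True
    have "0 < - c2 * (c1 + c2 * Y x)" if "x \<in> I" for x
    proof -
      have "0 < c2 * c2" using True c by (auto simp: zero_less_mult_iff)
      then have "c2 * c2 * Y x < 0" using Y_neg[OF that] by (rule mult_pos_neg)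
      then show ?thesis using True by (simp add: algebra_simps)
    qed
    then show thesis using that[of "- c2"] by (simp add: eventually_inf_principal left_filter_def)
  next
    case False
    have "((\<lambda>x. c1 * (c1 + c2 * Y x)) \<longlongrightarrow> c1 * (c1 + c2 * 0)) (left_filter x0 I)"
      by (intro tendsto_intros Y_tendsto_0)
    moreover have "0 < c1 * (c1 + c2 * 0)" using False by (metis not_real_square_gt_zero add_0_right mult_zero_right)
    ultimately have "eventually (\<lambda>x. 0 < c1 * (c1 + c2 * Y x)) (left_filter x0 I)"
      by (rule order_tendstoD(1))
    then show thesis by (rule that)
  qed
  then obtain a where a: "ereal a < x0" "\<forall>x\<in>I. a < x \<and> ereal x < x0 \<longrightarrow> 0 < s * (c1 + c2 * Y x)"
    unfolding eventually_left_filter[OF x0_not_MInf] by blast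
  obtain m where m: "m \<in> J" using J_nonempty .
  define a' where "a' = max a m"
  have "a' \<in> J" using a m J_eq by (auto simp: a'_def max_def)
  moreover have "\<forall>x\<in>{x. a' < x \<and> ereal x < x0}. 0 < s * (c1 + c2 * Y x)"
  proof
    fix x assume x: "x \<in> {x. a' < x \<and> ereal x < x0}"
    then have "a < x" "T < x" using m J_eq by (auto simp: a'_def)
    then show "0 < s * (c1 + c2 * Y x)" using a(2) x I_eq by auto
  qed
  then have "(\<forall>x\<in>{x. a' < x \<and> ereal x < x0}. 0 < c1 + c2 * Y x) \<or>
      (\<forall>x\<in>{x. a' < x \<and> ereal x < x0}. c1 + c2 * Y x < 0)"
    by (rule sign_cases_if_pos_mult)
  ultimately show thesis by (rule that)
qed

end

section \<open>Generalized convex functions\<close>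

locale gen_convex_function = wronskian_pair +
  fixes f :: "real \<Rightarrow> real"
  assumes f_gen_convex: "gen_convex \<phi>1 \<phi>2 J f"
begin

definition H :: "real \<Rightarrow> real" where
  "H x = f x / \<phi>1 x"

lemma f_eq: "x \<in> I \<Longrightarrow> f x = \<phi>1 x * H x"
  unfolding H_def using \<phi>1_pos[of x] by simp

lemma \<phi>2_eq: "x \<in> I \<Longrightarrow> \<phi>2 x = \<phi>1 x * Y x"
  unfolding Y_def using \<phi>1_pos[of x] by simp

lemma rel_convex_H: "rel_convex_on J Y H"
  unfolding rel_convex_on_def
proof (intro conjI ballI impI)
  show "strict_mono_on J Y" using monotone_on_subset[OF Y_strict_mono J_subset_I] .
next
  fix x1 x2 x3 assume xs: "x1 \<in> J" "x2 \<in> J" "x3 \<in> J" "x1 < x2 \<and> x2 < x3"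
  then have I: "x1 \<in> I" "x2 \<in> I" "x3 \<in> I" using J_subset_I by auto
  have "0 \<le> \<phi>1 x1 * (\<phi>2 x2 * f x3 - \<phi>2 x3 * f x2) - \<phi>1 x2 * (\<phi>2 x1 * f x3 - \<phi>2 x3 * f x1)
      + \<phi>1 x3 * (\<phi>2 x1 * f x2 - \<phi>2 x2 * f x1)"
    using f_gen_convex xs unfolding gen_convex_def by blast
  also have "\<dots> = \<phi>1 x1 * \<phi>1 x2 * \<phi>1 x3 *
      ((Y x2 - Y x1) * (H x3 - H x1) - (Y x3 - Y x1) * (H x2 - H x1))"
    unfolding f_eq[OF I(1)] f_eq[OF I(2)] f_eq[OF I(3)] \<phi>2_eq[OF I(1)] \<phi>2_eq[OF I(2)] \<phi>2_eq[OF I(3)]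
    by algebra
  finally have "0 \<le> \<phi>1 x1 * \<phi>1 x2 * \<phi>1 x3 *
      ((Y x2 - Y x1) * (H x3 - H x1) - (Y x3 - Y x1) * (H x2 - H x1))" .
  moreover have "0 < \<phi>1 x1 * \<phi>1 x2 * \<phi>1 x3" using \<phi>1_pos I by simp
  ultimately show "0 \<le> (Y x2 - Y x1) * (H x3 - H x1) - (Y x3 - Y x1) * (H x2 - H x1)"
    by (simp add: zero_le_mult_iff)
qed

lemma f_abs_continuous_on:
  assumes ab: "T < a" "a \<le> b" "ereal b < x0"
  shows "abs_continuous_on a b f"
proof -
  define a' where "a' = (T + a) / 2"
  obtain b' where b': "b < b'" "ereal b' < x0" using real_between_ereal[OF ab(3)] by blast
  have J: "a' \<in> J" "b' \<in> J" "a \<in> J" "b \<in> J"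
    using ab b' ereal_le_less_trans[of a' b x0] ereal_le_less_trans[of a b x0]
    unfolding J_eq a'_def by auto
  have sub: "{a..b} \<subseteq> J" using Icc_subset_J[OF J(3,4)] .
  then have sub_I: "{a..b} \<subseteq> I" using J_subset_I by simp
  obtain LY where "LY-lipschitz_on {a..b} Y" using lipschitz_on_Icc_if_C1[OF Y_deriv Y'_cont sub_I] .
  then obtain LH where LH: "LH-lipschitz_on {a..b} H"
    using rel_convex_on_lipschitz_on[OF rel_convex_H _ J(1,2) sub] ab b' unfolding a'_def by auto
  obtain L1 where "L1-lipschitz_on {a..b} \<phi>1" using lipschitz_on_Icc_if_C1[OF \<phi>1_deriv \<phi>1'_cont sub_I] .
  then obtain L where "L-lipschitz_on {a..b} (\<lambda>x. \<phi>1 x * H x)"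
    using lipschitz_on_real_mult[OF _ LH compact_Icc] by blast
  moreover have "f x = \<phi>1 x * H x" if "x \<in> {a..b}" for x using f_eq sub_I that by auto
  ultimately have "L-lipschitz_on {a..b} f" by (rule lipschitz_on_transform)
  then show ?thesis by (rule lipschitz_on_imp_abs_continuous_on)
qed

lemma quotient_eq:
  assumes "x \<in> I"
  shows "c1 * \<phi>1 x + c2 * \<phi>2 x = \<phi>1 x * (c1 + c2 * Y x)"
    and "(f x + a1 * \<phi>1 x + a2 * \<phi>2 x) / (c1 * \<phi>1 x + c2 * \<phi>2 x)
         = (H x + a1 + a2 * Y x) / (c1 + c2 * Y x)"
proof -
  show denom: "c1 * \<phi>1 x + c2 * \<phi>2 x = \<phi>1 x * (c1 + c2 * Y x)"
    unfolding \<phi>2_eq[OF assms] by (simp add: algebra_simps)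
  have "f x + a1 * \<phi>1 x + a2 * \<phi>2 x = \<phi>1 x * (H x + a1 + a2 * Y x)"
    unfolding f_eq[OF assms] \<phi>2_eq[OF assms] by (simp add: algebra_simps)
  then show "(f x + a1 * \<phi>1 x + a2 * \<phi>2 x) / (c1 * \<phi>1 x + c2 * \<phi>2 x)
         = (H x + a1 + a2 * Y x) / (c1 + c2 * Y x)"
    unfolding denom using \<phi>1_pos[OF assms] by simp
qed

lemma rel_convex_quotient_on:
  assumes K: "K \<subseteq> J" and c: "c1 \<noteq> 0 \<or> c2 \<noteq> 0"
    and sign: "(\<forall>x\<in>K. 0 < c1 + c2 * Y x) \<or> (\<forall>x\<in>K. c1 + c2 * Y x < 0)"
  obtains s Z where "s = 1 \<or> s = -1"
    "rel_convex_on K Z (\<lambda>x. s * ((H x + a1 + a2 * Y x) / (c1 + c2 * Y x)))"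
proof -
  have "rel_convex_on K Y (\<lambda>x. H x + a1 + a2 * Y x)"
    by (rule rel_convex_on_subset[OF rel_convex_on_add_affine[OF rel_convex_H] K])
  from rel_convex_on_quotient[OF this c sign] show thesis using that .
qed

lemma const_or_strict_mono_on_quotient:
  assumes S: "S \<subseteq> J" and nonzero: "\<And>x. x \<in> S \<Longrightarrow> c1 + c2 * Y x \<noteq> 0"
    and s: "s = 1 \<or> s = -1"
    and mono: "const_or_strict_mono_on S (\<lambda>x. s * ((H x + a1 + a2 * Y x) / (c1 + c2 * Y x)))"
  shows "(\<forall>x\<in>S. c1 * \<phi>1 x + c2 * \<phi>2 x \<noteq> 0) \<and>
    const_or_strict_mono_on S (\<lambda>x. (f x + a1 * \<phi>1 x + a2 * \<phi>2 x) / (c1 * \<phi>1 x + c2 * \<phi>2 x))"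
proof
  have S_I: "x \<in> I" if "x \<in> S" for x using that S J_subset_I by blast
  show "\<forall>x\<in>S. c1 * \<phi>1 x + c2 * \<phi>2 x \<noteq> 0"
  proof
    fix x assume x: "x \<in> S"
    show "c1 * \<phi>1 x + c2 * \<phi>2 x \<noteq> 0"
      using quotient_eq(1)[OF S_I[OF x]] \<phi>1_pos[OF S_I[OF x]] nonzero[OF x] by simp
  qed
  have "(f x + a1 * \<phi>1 x + a2 * \<phi>2 x) / (c1 * \<phi>1 x + c2 * \<phi>2 x)
        = (H x + a1 + a2 * Y x) / (c1 + c2 * Y x)" if "x \<in> S" for x
    using quotient_eq(2)[OF S_I[OF that]] .
  then have "const_or_strict_mono_on S
      (\<lambda>x. (f x + a1 * \<phi>1 x + a2 * \<phi>2 x) / (c1 * \<phi>1 x + c2 * \<phi>2 x))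
    \<longleftrightarrow> const_or_strict_mono_on S (\<lambda>x. (H x + a1 + a2 * Y x) / (c1 + c2 * Y x))"
    by (rule const_or_strict_mono_on_cong)
  then show "const_or_strict_mono_on S
      (\<lambda>x. (f x + a1 * \<phi>1 x + a2 * \<phi>2 x) / (c1 * \<phi>1 x + c2 * \<phi>2 x))"
    using const_or_strict_mono_on_sign_mult[OF s mono] by simp
qed

lemma quotient_const_or_strict_mono_near_T:
  assumes c: "c1 \<noteq> 0 \<or> c2 \<noteq> 0"
  shows "\<exists>b. T < b \<and> ereal b \<le> x0 \<and> (\<forall>x\<in>{T<..<b}. c1 * \<phi>1 x + c2 * \<phi>2 x \<noteq> 0) \<and>
           const_or_strict_mono_on {T<..<b}
             (\<lambda>x. (f x + a1 * \<phi>1 x + a2 * \<phi>2 x) / (c1 * \<phi>1 x + c2 * \<phi>2 x))"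
proof -
  obtain b0 where b0: "b0 \<in> J"
    and sign: "(\<forall>x\<in>{T<..<b0}. 0 < c1 + c2 * Y x) \<or> (\<forall>x\<in>{T<..<b0}. c1 + c2 * Y x < 0)"
    using affine_Y_sign_near_T[OF c] .
  define K where "K = {x. T < x \<and> ereal x < ereal b0}"
  have K_eq: "K = {T<..<b0}" unfolding K_def by auto
  have K_J: "K \<subseteq> J" using b0 ereal_le_less_trans[of _ b0 x0] unfolding K_eq J_eq by auto
  obtain s Z where s: "s = 1 \<or> s = -1"
    and conv: "rel_convex_on K Z (\<lambda>x. s * ((H x + a1 + a2 * Y x) / (c1 + c2 * Y x)))"
    using rel_convex_quotient_on[OF K_J c] sign unfolding K_eq by blast
  have "(T + b0) / 2 \<in> K" using b0 unfolding K_eq J_eq by auto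
  with rel_convex_on_const_or_strict_mono_at_left[OF conv K_def]
  obtain b where b: "b \<in> K"
    and mono: "const_or_strict_mono_on {T<..<b} (\<lambda>x. s * ((H x + a1 + a2 * Y x) / (c1 + c2 * Y x)))"
    by blast
  have sub: "{T<..<b} \<subseteq> K" using b unfolding K_eq by auto
  have "\<And>x. x \<in> {T<..<b} \<Longrightarrow> c1 + c2 * Y x \<noteq> 0" using sign sub unfolding K_eq by force
  from const_or_strict_mono_on_quotient[OF _ this s mono]
  show ?thesis using b sub K_J J_eq by (intro exI[of _ b]) auto
qed

lemma quotient_const_or_strict_mono_near_x0:
  assumes c: "c1 \<noteq> 0 \<or> c2 \<noteq> 0"
  shows "\<exists>a. T < a \<and> ereal a < x0 \<and>
           (\<forall>x\<in>{x. a < x \<and> ereal x < x0}. c1 * \<phi>1 x + c2 * \<phi>2 x \<noteq> 0) \<and>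
           const_or_strict_mono_on {x. a < x \<and> ereal x < x0}
             (\<lambda>x. (f x + a1 * \<phi>1 x + a2 * \<phi>2 x) / (c1 * \<phi>1 x + c2 * \<phi>2 x))"
proof -
  obtain a0 where a0: "a0 \<in> J"
    and sign: "(\<forall>x\<in>{x. a0 < x \<and> ereal x < x0}. 0 < c1 + c2 * Y x) \<or>
               (\<forall>x\<in>{x. a0 < x \<and> ereal x < x0}. c1 + c2 * Y x < 0)"
    using affine_Y_sign_near_x0[OF c] .
  define K where "K = {x. a0 < x \<and> ereal x < x0}"
  have K_J: "K \<subseteq> J" using a0 unfolding K_def J_eq by auto
  obtain s Z where s: "s = 1 \<or> s = -1"
    and conv: "rel_convex_on K Z (\<lambda>x. s * ((H x + a1 + a2 * Y x) / (c1 + c2 * Y x)))"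
    using rel_convex_quotient_on[OF K_J c] sign unfolding K_def by blast
  obtain m where "a0 < m" "ereal m < x0" using real_between_ereal a0 J_eq by blast
  then have "m \<in> K" unfolding K_def by simp
  with rel_convex_on_const_or_strict_mono_at_right[OF conv K_def]
  obtain a where a: "a \<in> K" and mono: "const_or_strict_mono_on {x. a < x \<and> ereal x < x0}
      (\<lambda>x. s * ((H x + a1 + a2 * Y x) / (c1 + c2 * Y x)))"
    by blast
  have sub: "{x. a < x \<and> ereal x < x0} \<subseteq> K" using a unfolding K_def by auto
  have "\<And>x. x \<in> {x. a < x \<and> ereal x < x0} \<Longrightarrow> c1 + c2 * Y x \<noteq> 0"
    using sign sub unfolding K_def by force
  from const_or_strict_mono_on_quotient[OF _ this s mono]
  show ?thesis using a sub K_J J_eq by (intro exI[of _ a]) auto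
qed

definition f1_star :: "real \<Rightarrow> real" where
  "f1_star t = (f t * \<phi>2' t - deriv f t * \<phi>2 t) / (\<phi>1 t * \<phi>2' t - \<phi>1' t * \<phi>2 t)"

definition f2_star :: "real \<Rightarrow> real" where
  "f2_star t = - (f t * \<phi>1' t - deriv f t * \<phi>1 t) / (\<phi>1 t * \<phi>2' t - \<phi>1' t * \<phi>2 t)"

definition F_star :: "real \<Rightarrow> real" where
  "F_star t = \<phi>1 T * f1_star t + \<phi>2 T * f2_star t"

lemma H_deriv:
  assumes t: "t \<in> J" and f: "f differentiable (at t)"
  shows "(H has_real_derivative f2_star t * Y' t) (at t)"
proof -
  have tI: "t \<in> I" using t J_subset_I by blast
  have "(f has_real_derivative deriv f t) (at t)"
    using f DERIV_deriv_iff_real_differentiable by blast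
  then have "(H has_real_derivative (deriv f t * \<phi>1 t - f t * \<phi>1' t) / (\<phi>1 t * \<phi>1 t)) (at t)"
    unfolding H_def[abs_def] using DERIV_divide[OF _ \<phi>1_deriv_at[OF t]] \<phi>1_pos[OF tI] by simp
  moreover have "(deriv f t * \<phi>1 t - f t * \<phi>1' t) / (\<phi>1 t * \<phi>1 t) = f2_star t * Y' t"
    unfolding f2_star_def Y'_def using wronskian_pos[OF tI] \<phi>1_pos[OF tI]
    by (simp add: field_simps power2_eq_square)
  ultimately show ?thesis by simp
qed

lemma f2_star_le_chord_slope:
  assumes "s \<in> J" "t \<in> J" "s < t" "f differentiable (at s)"
  shows "f2_star s \<le> chord_slope Y H s t"
proof -
  have "Y' s \<noteq> 0" using Y'_pos assms(1) J_subset_I by fastforce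
  then show ?thesis
    using deriv_quotient_le_chord_slope[OF rel_convex_H open_J assms(1-3) H_deriv[OF assms(1,4)]
        Y_deriv_at[OF assms(1)]] by simp
qed

lemma chord_slope_le_f2_star:
  assumes "s \<in> J" "t \<in> J" "s < t" "f differentiable (at t)"
  shows "chord_slope Y H s t \<le> f2_star t"
proof -
  have "Y' t \<noteq> 0" using Y'_pos assms(2) J_subset_I by fastforce
  then show ?thesis
    using chord_slope_le_deriv_quotient[OF rel_convex_H open_J assms(1-3) H_deriv[OF assms(2,4)]
        Y_deriv_at[OF assms(2)]] by simp
qed

lemma f1_star_eq:
  assumes "t \<in> J"
  shows "f1_star t = H t - Y t * f2_star t"
proof -
  have tI: "t \<in> I" using assms J_subset_I by blast
  have "\<phi>1 t \<noteq> 0" "\<phi>1 t * \<phi>2' t - \<phi>1' t * \<phi>2 t \<noteq> 0"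
    using \<phi>1_pos[OF tI] wronskian_pos[OF tI] by auto
  then show ?thesis unfolding f1_star_def f2_star_def H_def Y_def
    by (simp add: field_simps)
qed

lemma F_star_eq: "F_star t = \<phi>1 T * (f1_star t + Y T * f2_star t)"
  unfolding F_star_def \<phi>2_eq[OF T_in_I] by (simp add: algebra_simps)

text \<open>\<open>f1_star\<close> and \<open>F_star / \<phi>1 T\<close> are the values at \<open>Y = 0\<close> and \<open>Y = Y T\<close> of the tangent
  line to \<open>H\<close> as a function of \<open>Y\<close>; as its slope \<open>f2_star\<close> increases and \<open>Y T < Y < 0\<close> on \<open>J\<close>,
  the first value increases and the second decreases.\<close>
lemma star_functions_mono:
  assumes st: "s \<in> J" "t \<in> J" "s < t" and f: "f differentiable (at s)" "f differentiable (at t)"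
  shows "f2_star s \<le> f2_star t" "f1_star s \<le> f1_star t" "F_star t \<le> F_star s"
proof -
  have sI: "s \<in> I" and tI: "t \<in> I" using st J_subset_I by auto
  define S where "S = chord_slope Y H s t"
  have b: "f2_star s \<le> S" "S \<le> f2_star t"
    unfolding S_def using f2_star_le_chord_slope[OF st f(1)] chord_slope_le_f2_star[OF st f(2)] by auto
  then show "f2_star s \<le> f2_star t" by simp
  have Yst: "Y s < Y t" using strict_mono_onD[OF Y_strict_mono sI tI st(3)] .
  have YT: "Y T < Y s" "Y T < Y t"
    using strict_mono_onD[OF Y_strict_mono T_in_I] sI tI st J_eq by auto
  have "H t - H s = S * (Y t - Y s)" unfolding S_def using chord_slope_times Yst by simp
  then have f1: "f1_star t - f1_star s = Y t * (S - f2_star t) + Y s * (f2_star s - S)"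
    using f1_star_eq[OF st(1)] f1_star_eq[OF st(2)] by (simp add: algebra_simps)
  have "0 \<le> Y t * (S - f2_star t)" "0 \<le> Y s * (f2_star s - S)"
    using Y_neg[OF tI] Y_neg[OF sI] b by (auto intro: mult_nonpos_nonpos)
  then show "f1_star s \<le> f1_star t" using f1 by simp
  have "F_star t - F_star s = \<phi>1 T * ((f1_star t - f1_star s) + Y T * (f2_star t - f2_star s))"
    unfolding F_star_eq by (simp add: algebra_simps)
  also have "\<dots> = \<phi>1 T * ((Y t - Y T) * (S - f2_star t) + (Y s - Y T) * (f2_star s - S))"
    unfolding f1 by (simp add: algebra_simps)
  finally have "F_star t - F_star s = \<phi>1 T * ((Y t - Y T) * (S - f2_star t) + (Y s - Y T) * (f2_star s - S))" .
  moreover have "(Y t - Y T) * (S - f2_star t) \<le> 0" "(Y s - Y T) * (f2_star s - S) \<le> 0"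
    using YT b by (auto intro: mult_nonneg_nonpos)
  ultimately have "F_star t - F_star s \<le> 0"
    using \<phi>1_pos[OF T_in_I] by (simp add: mult_nonneg_nonpos)
  then show "F_star t \<le> F_star s" by simp
qed

lemma sgn_\<phi>2: "t \<in> I \<Longrightarrow> sgn (\<phi>2 t) = -1"
  using \<phi>2_eq[of t] \<phi>1_pos[of t] Y_neg[of t] by (simp add: mult_pos_neg)

lemma f_differentiable_if_H_differentiable:
  assumes t: "t \<in> J" and H: "H differentiable (at t)"
  shows "f differentiable (at t)"
proof -
  obtain H' where "(H has_real_derivative H') (at t)" using H real_differentiable_def by blast
  then have "((\<lambda>x. \<phi>1 x * H x) has_real_derivative \<phi>1' t * H t + H' * \<phi>1 t) (at t)"
    by (rule DERIV_mult[OF \<phi>1_deriv_at[OF t]])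
  moreover have "\<phi>1 x * H x = f x" if "x \<in> J" for x using f_eq that J_subset_I by auto
  ultimately have "(f has_real_derivative \<phi>1' t * H t + H' * \<phi>1 t) (at t)"
    using has_field_derivative_transform_within_open[OF _ open_J t] by blast
  then show ?thesis using real_differentiable_def by blast
qed

lemma countable_not_differentiable: "countable {t \<in> J. \<not> f differentiable (at t)}"
proof (rule countable_subset)
  show "countable {t \<in> J. \<not> H differentiable (at t)}"
    using rel_convex_on_countable_not_differentiable[OF rel_convex_H open_J] Y_deriv_at
    real_differentiable_def by blast
  show "{t \<in> J. \<not> f differentiable (at t)} \<subseteq> {t \<in> J. \<not> H differentiable (at t)}"
    using f_differentiable_if_H_differentiable by blast
qed

lemma star_functions_mono_ae:
  "\<exists>N. N \<in> null_sets lebesgue \<and> (\<forall>t \<in> J - N. f differentiable (at t)) \<and>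
     mono_on (J - N) f2_star \<and> mono_on (J - N) f1_star \<and> antimono_on (J - N) F_star \<and>
     mono_on (J - N) (\<lambda>t. sgn (\<phi>2 t) * F_star t)"
proof (intro exI conjI)
  define N where "N = {t \<in> J. \<not> f differentiable (at t)}"
  show "N \<in> null_sets lebesgue"
    unfolding N_def using countable_not_differentiable
    by (intro null_sets_completionI countable_imp_null_set_lborel)
  show diff: "\<forall>t \<in> J - N. f differentiable (at t)" unfolding N_def by blast
  note mono = star_functions_mono[of r s for r s]
  have JN: "r \<in> J" "f differentiable (at r)" if "r \<in> J - N" for r using that diff by auto
  show "mono_on (J - N) f2_star" "mono_on (J - N) f1_star"
    using mono JN by (auto intro!: mono_onI_less)
  show "antimono_on (J - N) F_star" using mono JN by (auto intro!: antimono_onI_less)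
  show "mono_on (J - N) (\<lambda>t. sgn (\<phi>2 t) * F_star t)"
    using mono JN sgn_\<phi>2 J_subset_I by (auto intro!: mono_onI_less simp: subset_iff)
qed


lemma H_tendsto: obtains L where "((\<lambda>x. ereal (H x)) \<longlongrightarrow> L) (left_filter x0 J)"
proof -
  obtain m where "m \<in> J" using J_nonempty .
  then obtain a where a: "a \<in> J" and H: "const_or_strict_mono_on {x. a < x \<and> ereal x < x0} H"
    using rel_convex_on_const_or_strict_mono_at_right[OF rel_convex_H J_eq] by blast
  have "ereal a < x0" using a J_eq by simp
  then show thesis using const_or_strict_mono_on_tendsto_left_filter[OF x0_not_MInf _ H] that by blast
qed

lemma left_filter_J_neq_bot: "left_filter x0 J \<noteq> bot"
  using left_filter_neq_bot[OF x0_not_MInf T_less_x0] J_eq by simp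

lemma Y_tendsto_0_J: "(Y \<longlongrightarrow> 0) (left_filter x0 J)"
  using tendsto_mono[OF left_filter_mono[OF J_subset_I] Y_tendsto_0] .

lemma f1_star_le_limit:
  assumes L: "((\<lambda>x. ereal (H x)) \<longlongrightarrow> L) (left_filter x0 J)"
    and t: "t \<in> J" "f differentiable (at t)"
  shows "ereal (f1_star t) \<le> L"
proof -
  have "((\<lambda>u. ereal (H u) + ereal (- (Y u * f2_star t))) \<longlongrightarrow> L + ereal (- (0 * f2_star t)))
      (left_filter x0 J)"
    by (intro tendsto_add_ereal_general L tendsto_ereal tendsto_intros Y_tendsto_0_J) auto
  then have lim: "((\<lambda>u. ereal (H u - Y u * f2_star t)) \<longlongrightarrow> L) (left_filter x0 J)" by simp
  have "f1_star t \<le> H u - Y u * f2_star t" if u: "u \<in> J" "t < u" for u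
  proof -
    have "Y t < Y u" using strict_mono_onD[OF Y_strict_mono] t(1) u J_subset_I by blast
    moreover have "f2_star t \<le> chord_slope Y H t u" using f2_star_le_chord_slope[OF t(1) u t(2)] .
    ultimately have "f2_star t * (Y u - Y t) \<le> H u - H t"
      using chord_slope_times[of Y t u H] by (simp add: mult_right_mono)
    then show ?thesis using f1_star_eq[OF t(1)] by (simp add: algebra_simps)
  qed
  then have "eventually (\<lambda>u. ereal (f1_star t) \<le> ereal (H u - Y u * f2_star t)) (left_filter x0 J)"
    unfolding eventually_left_filter[OF x0_not_MInf] using t J_eq by auto
  then show ?thesis using tendsto_lowerbound[OF lim _ left_filter_J_neq_bot] by simp
qed

text \<open>\<open>f1_star x\<close> is the value at \<open>Y = 0\<close> of the tangent of \<open>H\<close> (as a function of \<open>Y\<close>) at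
  \<open>x\<close>; it is squeezed between \<open>L\<close> and the value \<open>A x\<close> at \<open>Y = 0\<close> of the chord through
  \<open>m\<close> and \<open>x\<close>, which tends to \<open>L\<close> because \<open>Y x \<rightarrow> 0\<close>.\<close>
lemma f1_star_tendsto:
  assumes L: "((\<lambda>x. ereal (H x)) \<longlongrightarrow> L) (left_filter x0 J)"
  shows "((\<lambda>x. ereal (f1_star x)) \<longlongrightarrow> L) (left_filter x0 {x \<in> J. f differentiable (at x)})"
proof -
  obtain m where m: "m \<in> J" using J_nonempty .
  then have mI: "m \<in> I" and Ym: "Y m < 0" using J_subset_I Y_neg by auto
  define A where "A x = H x * (- Y m / (Y x - Y m)) + Y x * H m / (Y x - Y m)" for x
  have "((\<lambda>x. ereal (H x) * ereal (- Y m / (Y x - Y m)) + ereal (Y x * H m / (Y x - Y m)))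
      \<longlongrightarrow> L * ereal (- Y m / (0 - Y m)) + ereal (0 * H m / (0 - Y m))) (left_filter x0 J)"
    using Ym by (intro tendsto_add_ereal_general tendsto_mult_ereal L tendsto_ereal tendsto_intros
        Y_tendsto_0_J) auto
  then have "((\<lambda>x. ereal (A x)) \<longlongrightarrow> L) (left_filter x0 J)"
    using Ym by (simp add: A_def)
  then have lim_A: "((\<lambda>x. ereal (A x)) \<longlongrightarrow> L) (left_filter x0 {x \<in> J. f differentiable (at x)})"
    by (rule tendsto_mono[OF left_filter_mono, rotated]) auto
  have "A x \<le> f1_star x" if x: "x \<in> J" "f differentiable (at x)" "m < x" for x
  proof -
    have "Y m < Y x" using strict_mono_onD[OF Y_strict_mono mI] x J_subset_I by blast
    then have "A x = H x - Y x * chord_slope Y H m x"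
      unfolding A_def chord_slope_def using chord_intercept_eq[of "Y x" "Y m"] by simp
    moreover have "chord_slope Y H m x \<le> f2_star x" using chord_slope_le_f2_star[OF m x(1,3,2)] .
    moreover have "Y x < 0" using Y_neg x J_subset_I by blast
    ultimately show ?thesis using f1_star_eq[OF x(1)] by (simp add: mult_left_mono_neg)
  qed
  then have lower: "eventually (\<lambda>x. ereal (A x) \<le> ereal (f1_star x)) (left_filter x0 {x \<in> J. f differentiable (at x)})"
    unfolding eventually_left_filter[OF x0_not_MInf] using m J_eq by auto
  have upper: "eventually (\<lambda>x. ereal (f1_star x) \<le> L) (left_filter x0 {x \<in> J. f differentiable (at x)})"
    unfolding eventually_left_filter[OF x0_not_MInf] using f1_star_le_limit[OF L] T_less_x0 by auto
  show ?thesis by (rule tendsto_sandwich[OF lower upper lim_A tendsto_const])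
qed

lemma deriv_quotient_eq_f1_star:
  assumes x: "x \<in> J" and f: "f differentiable (at x)"
  shows "deriv (\<lambda>y. f y / \<phi>2 y) x / deriv (\<lambda>y. \<phi>1 y / \<phi>2 y) x = f1_star x"
proof -
  have xI: "x \<in> I" using x J_subset_I by blast
  have f': "(f has_real_derivative deriv f x) (at x)"
    using f DERIV_deriv_iff_real_differentiable by blast
  have num: "deriv (\<lambda>y. f y / \<phi>2 y) x = (deriv f x * \<phi>2 x - f x * \<phi>2' x) / (\<phi>2 x * \<phi>2 x)"
    by (rule DERIV_imp_deriv[OF DERIV_divide[OF f' \<phi>2_deriv_at[OF x] \<phi>2_nonzero[OF xI]]])
  have den: "deriv (\<lambda>y. \<phi>1 y / \<phi>2 y) x = (\<phi>1' x * \<phi>2 x - \<phi>1 x * \<phi>2' x) / (\<phi>2 x * \<phi>2 x)"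
    by (rule DERIV_imp_deriv[OF DERIV_divide[OF \<phi>1_deriv_at[OF x] \<phi>2_deriv_at[OF x] \<phi>2_nonzero[OF xI]]])
  have "\<phi>1' x * \<phi>2 x - \<phi>1 x * \<phi>2' x \<noteq> 0" "\<phi>1 x * \<phi>2' x - \<phi>1' x * \<phi>2 x \<noteq> 0"
    using wronskian_pos[OF xI] by auto
  then show ?thesis unfolding num den f1_star_def using \<phi>2_nonzero[OF xI] by (simp add: field_simps)
qed

lemma limit_of_quotients:
  "\<exists>L. ((\<lambda>x. ereal (f x / \<phi>1 x)) \<longlongrightarrow> L) (left_filter x0 J) \<and>
       ((\<lambda>x. ereal (deriv (\<lambda>y. f y / \<phi>2 y) x / deriv (\<lambda>y. \<phi>1 y / \<phi>2 y) x)) \<longlongrightarrow> L)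
         (left_filter x0 {x \<in> J. f differentiable (at x)})"
proof -
  obtain L where L: "((\<lambda>x. ereal (H x)) \<longlongrightarrow> L) (left_filter x0 J)" using H_tendsto .
  have "eventually (\<lambda>x. ereal (f1_star x) = ereal (deriv (\<lambda>y. f y / \<phi>2 y) x / deriv (\<lambda>y. \<phi>1 y / \<phi>2 y) x))
      (left_filter x0 {x \<in> J. f differentiable (at x)})"
    unfolding left_filter_def eventually_inf_principal using deriv_quotient_eq_f1_star by simp
  with f1_star_tendsto[OF L]
  have "((\<lambda>x. ereal (deriv (\<lambda>y. f y / \<phi>2 y) x / deriv (\<lambda>y. \<phi>1 y / \<phi>2 y) x)) \<longlongrightarrow> L)
      (left_filter x0 {x \<in> J. f differentiable (at x)})"
    by (rule Lim_transform_eventually)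
  moreover have "((\<lambda>x. ereal (f x / \<phi>1 x)) \<longlongrightarrow> L) (left_filter x0 J)" using L unfolding H_def .
  ultimately show ?thesis by blast
qed

end

theorem theorem6p1:
  fixes x0 :: ereal and T :: real
    and \<phi>1 \<phi>2 \<phi>1' \<phi>2' f :: "real \<Rightarrow> real"
  defines "I \<equiv> {x. T \<le> x \<and> ereal x < x0}"
    and "J \<equiv> {x. T < x \<and> ereal x < x0}"
    and "f1s \<equiv> (\<lambda>t. (f t * \<phi>2' t - deriv f t * \<phi>2 t) / (\<phi>1 t * \<phi>2' t - \<phi>1' t * \<phi>2 t))"
    and "f2s \<equiv> (\<lambda>t. - (f t * \<phi>1' t - deriv f t * \<phi>1 t) / (\<phi>1 t * \<phi>2' t - \<phi>1' t * \<phi>2 t))"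
    and "Fs \<equiv> (\<lambda>t. \<phi>1 T * ((f t * \<phi>2' t - deriv f t * \<phi>2 t) / (\<phi>1 t * \<phi>2' t - \<phi>1' t * \<phi>2 t))
                   + \<phi>2 T * (- (f t * \<phi>1' t - deriv f t * \<phi>1 t) / (\<phi>1 t * \<phi>2' t - \<phi>1' t * \<phi>2 t)))"
  assumes "x0 \<noteq> -\<infinity>"
    and "ereal T < x0"
    and d1: "\<And>x. x \<in> I \<Longrightarrow> (\<phi>1 has_real_derivative \<phi>1' x) (at x within I)"
    and d2: "\<And>x. x \<in> I \<Longrightarrow> (\<phi>2 has_real_derivative \<phi>2' x) (at x within I)"
    and "continuous_on I \<phi>1'" and "continuous_on I \<phi>2'"
    and "\<phi>2 \<in> o[left_filter x0 I](\<phi>1)"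
    and "\<And>x. x \<in> I \<Longrightarrow> \<phi>1 x > 0"
    and "\<And>x. x \<in> I \<Longrightarrow> \<phi>2 x \<noteq> 0"
    and "\<And>x. x \<in> I \<Longrightarrow> \<phi>1 x * \<phi>2' x - \<phi>1' x * \<phi>2 x > 0"
    and "gen_convex \<phi>1 \<phi>2 J f"
  shows
    \<comment> \<open>(i)\<close>
    "(\<forall>a b. T < a \<and> a \<le> b \<and> ereal b < x0 \<longrightarrow> abs_continuous_on a b f)
     \<comment> \<open>(ii)\<close>
     \<and> (\<exists>N. N \<in> null_sets lebesgue \<and>
          (\<forall>t \<in> J - N. f differentiable (at t)) \<and>
          mono_on (J - N) f2s \<and>
          ((mono_on (J - N) f1s \<and> antimono_on (J - N) Fs) \<or>
           (antimono_on (J - N) f1s \<and> mono_on (J - N) Fs)) \<and>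
          mono_on (J - N) (\<lambda>t. sgn (\<phi>2 t) * Fs t))
     \<comment> \<open>(iii)\<close>
     \<and> (\<forall>a1 a2 c1 c2 :: real. (c1 \<noteq> 0 \<or> c2 \<noteq> 0) \<longrightarrow>
          (let g = (\<lambda>x. (f x + a1 * \<phi>1 x + a2 * \<phi>2 x) / (c1 * \<phi>1 x + c2 * \<phi>2 x))
           in (\<exists>b. T < b \<and> ereal b \<le> x0 \<and>
                 (\<forall>x\<in>{T<..<b}. c1 * \<phi>1 x + c2 * \<phi>2 x \<noteq> 0) \<and>
                 ((\<exists>c. \<forall>x\<in>{T<..<b}. g x = c) \<or>
                  strict_mono_on {T<..<b} g \<or> strict_antimono_on {T<..<b} g)) \<and>
              (\<exists>a. T < a \<and> ereal a < x0 \<and>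
                 (\<forall>x\<in>{x. a < x \<and> ereal x < x0}. c1 * \<phi>1 x + c2 * \<phi>2 x \<noteq> 0) \<and>
                 ((\<exists>c. \<forall>x\<in>{x. a < x \<and> ereal x < x0}. g x = c) \<or>
                  strict_mono_on {x. a < x \<and> ereal x < x0} g \<or>
                  strict_antimono_on {x. a < x \<and> ereal x < x0} g))))
     \<comment> \<open>(iv)\<close>
     \<and> (\<exists>L :: ereal.
          ((\<lambda>x. ereal (f x / \<phi>1 x)) \<longlongrightarrow> L) (left_filter x0 J) \<and>
          ((\<lambda>x. ereal (deriv (\<lambda>y. f y / \<phi>2 y) x / deriv (\<lambda>y. \<phi>1 y / \<phi>2 y) x)) \<longlongrightarrow> L)
            (left_filter x0 {x \<in> J. f differentiable (at x)}))"
proof -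
  interpret gen_convex_function x0 T I J \<phi>1 \<phi>2 \<phi>1' \<phi>2' f
    by unfold_locales (use assms in \<open>simp_all add: I_def J_def\<close>)
  have stars: "f1s = f1_star" "f2s = f2_star" "Fs = F_star"
    unfolding f1s_def f2s_def Fs_def by (simp_all add: fun_eq_iff f1_star_def f2_star_def F_star_def)
  show ?thesis
    unfolding stars Let_def const_or_strict_mono_on_def[symmetric]
    using f_abs_continuous_on star_functions_mono_ae quotient_const_or_strict_mono_near_T
      quotient_const_or_strict_mono_near_x0 limit_of_quotients by blast
qed

end
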